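(* Assume conditions (A1)–(A7) below hold. Then $\gamma_n\|\hat Q_\kappa^{-1}Z_\kappa'\bar U/n\|=O_p(\kappa^{1/2}/n^{1/2})$ as $n\to\infty$ (the left side being interpreted as $0$ when $\gamma_n=0$).
   Context: Model: $d\ge2$ integer; $(Y,X)$ random with $X=(X^1,\dots,X^d)$; sample $\{(Y_i,X_i)\}_{i=1}^n$. $F$ known, $\mu$ constant, $m_j:[-1,1]\to\mathbb R$ with $\int_{-1}^1m_j=0$, $m(x)=\sum_jm_j(x^j)$. $\mathcal X=[-1,1]^d$, $U=Y-F[\mu+m(X)]$, $U_i=Y_i-F[\mu+m(X_i)]$, $V(x)=\mathrm{Var}(U\mid X=x)$. $\|A\|=[\mathrm{trace}(A'A)]^{1/2}$. Basis $\{p_k\}$ on $[-1,1]$ with $m_j=\sum_k\theta_{jk}p_k$; $d(\kappa)=\kappa d+1$; $P_\kappa(x)=[1,p_1(x^1),\dots,p_\kappa(x^1),\dots,p_1(x^d),\dots,p_\kappa(x^d)]'$; $\theta_\kappa=(\mu,\theta_{11},\dots,\theta_{d\kappa})'$; $\zeta_\kappa=\sup_{\mathcal X}\|P_\kappa\|$; $Q_\kappa=\mathbf E\{F'[\mu+m(X)]^2P_\kappa(X)P_\kappa(X)'\}$ (entries $Q_{\kappa,ij}$, smallest eigenvalue $\lambda_{\kappa,\min}$); $\Psi_\kappa=Q_\kappa^{-1}\mathbf E\{F'[\mu+m(X)]^2V(X)P_\kappa P_\kappa'\}Q_\kappa^{-1}$; $\Theta_\kappa=[-C_\theta,C_\theta]^{d(\kappa)}$.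 $Z_{\kappa i}=F'[\mu+m(X_i)]P_\kappa(X_i)$, $Z_\kappa$ is the $n\times d(\kappa)$ matrix with $i$th row $Z_{\kappa i}'$, $\hat Q_\kappa=n^{-1}\sum_iZ_{\kappa i}Z_{\kappa i}'$, $\bar U=(U_1,\dots,U_n)'$, and $\gamma_n$ is the indicator that the smallest eigenvalue of $\hat Q_\kappa$ is at least $c_\lambda/2$. Assumptions: (A1) data i.i.d., $\mathbf E(Y\mid X=x)=F[\mu+m(x)]$ a.e. (A2) support of $X$ is $\mathcal X$; density $f_X$ bounded, bounded away from zero, twice continuously differentiable; $0<c_V\le V\le C_V<\infty$; $\mathbf E|U|^j\le C_U^{j-2}j!\mathbf E(U^2)<\infty$, $j\ge2$. (A3) $|m_j|\le C_m$, $m_j\in C^2[-1,1]$; on $I=[\mu-C_md,\mu+C_md]$: $F\le C_{F1}$, $0<c_{F2}\le F'\le C_{F2}$, $F\in C^2$, $F''$ Lipschitz. (A4) $|Q_{\kappa,ij}|\le C_Q$, $\lambda_{\kappa,\min}>c_\lambda>0$; largest eigenvalue of $\Psi_\kappa$ bounded. (A5) $\int p_k=0$, $\int p_jp_k=\delta_{jk}$; $\zeta_\kappa\ge c_\kappa>0$ for large $\kappa$; $\zeta_\kappa=O(\kappa^{1/2})$; some $\theta_{\kappa0}\in\Theta_\kappa$ has $\sup_{\mathcal X}|\mu+m-P_\kappa'\theta_{\kappa0}|=O(\kappa^{-2})$; $\theta_\kappa$ interior to $\Theta_\kappa$. (A6) $\kappa=C_\kappa n^{4/15+\nu}$, $0<\nu<1/30$;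 $h=C_hn^{-1/5}$. (A7) the kernel $K$ is a bounded continuous symmetric probability density on $[-1,1]$. *)

theory Defs
  imports "HOL-Probability.Probability" "HOL-Library.Landau_Symbols"
    "Jordan_Normal_Form.Char_Poly" "Jordan_Normal_Form.Gauss_Jordan_Elimination"
begin

text \<open>Vectors/matrices of varying dimension d(kappa) are Jordan_Normal_Form vectors/matrices
  (types real Matrix.vec, real mat).  Points of R^d are elements of real^'d (Cartesian type),
  with d = CARD('d).\<close>

text \<open>A fixed enumeration of the d coordinates, 0,...,d-1; used only to lay out P_kappa(x).\<close>
definition coord :: "nat \<Rightarrow> 'd::finite" where
  "coord = (SOME f. bij_betw f {..<CARD('d)} (UNIV :: 'd set))"

definition cube :: "(real^'d::finite) set" where
  "cube = cbox (- 1) 1"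

text \<open>P_kappa(x) = [1, p_1(x^1),...,p_kappa(x^1),...,p_1(x^d),...,p_kappa(x^d)]'\<close>
definition Pvec :: "(nat \<Rightarrow> real \<Rightarrow> real) \<Rightarrow> nat \<Rightarrow> real^'d::finite \<Rightarrow> real Matrix.vec" where
  "Pvec p \<kappa> x = Matrix.vec (\<kappa> * CARD('d) + 1)
     (\<lambda>i. if i = 0 then 1 else p ((i - 1) mod \<kappa> + 1) (vec_nth x (coord ((i - 1) div \<kappa>))))"

definition madd :: "('d::finite \<Rightarrow> real \<Rightarrow> real) \<Rightarrow> real^'d \<Rightarrow> real" where
  "madd mj x = (\<Sum>j\<in>UNIV. mj j (vec_nth x j))"

definition vnorm :: "real Matrix.vec \<Rightarrow> real" where
  "vnorm v = sqrt (\<Sum>i<dim_vec v. (v $ i)^2)"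

definition min_eig :: "real mat \<Rightarrow> real" where
  "min_eig A = Min {e. eigenvalue A e}"

definition max_eig :: "real mat \<Rightarrow> real" where
  "max_eig A = Max {e. eigenvalue A e}"

definition zeta :: "(nat \<Rightarrow> real \<Rightarrow> real) \<Rightarrow> nat \<Rightarrow> 'd::finite itself \<Rightarrow> real" where
  "zeta p \<kappa> _ = (SUP x\<in>(cube :: (real^'d) set). vnorm (Pvec p \<kappa> x))"

definition Qmat :: "'a measure \<Rightarrow> ('a \<Rightarrow> real^'d::finite) \<Rightarrow> (real \<Rightarrow> real) \<Rightarrow> real
     \<Rightarrow> ('d \<Rightarrow> real \<Rightarrow> real) \<Rightarrow> (nat \<Rightarrow> real \<Rightarrow> real) \<Rightarrow> nat \<Rightarrow> real mat" where
  "Qmat M X F' \<mu> mj p \<kappa> = mat (\<kappa> * CARD('d) + 1) (\<kappa> * CARD('d) + 1)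
     (\<lambda>(a, b). \<integral>\<omega>. (F' (\<mu> + madd mj (X \<omega>)))^2 * (Pvec p \<kappa> (X \<omega>) $ a) * (Pvec p \<kappa> (X \<omega>) $ b) \<partial>M)"

definition Psimat :: "'a measure \<Rightarrow> ('a \<Rightarrow> real^'d::finite) \<Rightarrow> (real \<Rightarrow> real) \<Rightarrow> real
     \<Rightarrow> ('d \<Rightarrow> real \<Rightarrow> real) \<Rightarrow> (nat \<Rightarrow> real \<Rightarrow> real) \<Rightarrow> (real^'d \<Rightarrow> real) \<Rightarrow> nat \<Rightarrow> real mat" where
  "Psimat M X F' \<mu> mj p V \<kappa> =
     (let Qi = the (mat_inverse (Qmat M X F' \<mu> mj p \<kappa>));
          W = mat (\<kappa> * CARD('d) + 1) (\<kappa> * CARD('d) + 1)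
            (\<lambda>(a, b). \<integral>\<omega>. (F' (\<mu> + madd mj (X \<omega>)))^2 * V (X \<omega>)
                 * (Pvec p \<kappa> (X \<omega>) $ a) * (Pvec p \<kappa> (X \<omega>) $ b) \<partial>M)
      in Qi * W * Qi)"

text \<open>The n x d(kappa) matrix Z_kappa with i-th row Z_{kappa i}' = F'[mu+m(X_i)] P_kappa(X_i)'
  (sample indexed by i = 0,...,n-1).\<close>
definition Zmat :: "(real \<Rightarrow> real) \<Rightarrow> real \<Rightarrow> ('d::finite \<Rightarrow> real \<Rightarrow> real) \<Rightarrow> (nat \<Rightarrow> real \<Rightarrow> real)
     \<Rightarrow> nat \<Rightarrow> (nat \<Rightarrow> 'a \<Rightarrow> real^'d) \<Rightarrow> nat \<Rightarrow> 'a \<Rightarrow> real mat" where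
  "Zmat F' \<mu> mj p \<kappa> X n \<omega> = mat n (\<kappa> * CARD('d) + 1)
     (\<lambda>(i, a). F' (\<mu> + madd mj (X i \<omega>)) * (Pvec p \<kappa> (X i \<omega>) $ a))"

definition Qhat :: "(real \<Rightarrow> real) \<Rightarrow> real \<Rightarrow> ('d::finite \<Rightarrow> real \<Rightarrow> real) \<Rightarrow> (nat \<Rightarrow> real \<Rightarrow> real)
     \<Rightarrow> nat \<Rightarrow> (nat \<Rightarrow> 'a \<Rightarrow> real^'d) \<Rightarrow> nat \<Rightarrow> 'a \<Rightarrow> real mat" where
  "Qhat F' \<mu> mj p \<kappa> X n \<omega> =
     (1 / real n) \<cdot>\<^sub>m (transpose_mat (Zmat F' \<mu> mj p \<kappa> X n \<omega>) * Zmat F' \<mu> mj p \<kappa> X n \<omega>)"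

definition Ubar :: "(real \<Rightarrow> real) \<Rightarrow> real \<Rightarrow> ('d::finite \<Rightarrow> real \<Rightarrow> real)
     \<Rightarrow> (nat \<Rightarrow> 'a \<Rightarrow> real) \<Rightarrow> (nat \<Rightarrow> 'a \<Rightarrow> real^'d) \<Rightarrow> nat \<Rightarrow> 'a \<Rightarrow> real Matrix.vec" where
  "Ubar F \<mu> mj Y X n \<omega> = Matrix.vec n (\<lambda>i. Y i \<omega> - F (\<mu> + madd mj (X i \<omega>)))"

text \<open>Stochastic order: T_n = O_p(a_n).  Stated with outer probability so that it
  does not depend on measurability of the events.\<close>
definition bigOp :: "'a measure \<Rightarrow> (nat \<Rightarrow> 'a \<Rightarrow> real) \<Rightarrow> (nat \<Rightarrow> real) \<Rightarrow> bool" where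
  "bigOp M T a \<longleftrightarrow>
     (\<forall>\<epsilon>>0. \<exists>C N. \<forall>n\<ge>N. \<exists>A\<in>sets M.
        {\<omega>\<in>space M. \<bar>T n \<omega>\<bar> > C * a n} \<subseteq> A \<and> measure M A < \<epsilon>)"

end

(*
  On the event gamma_n the symmetric matrix Qhat has smallest eigenvalue at least c_lam/2,
  so minimising its Rayleigh quotient gives ||Qhat^-1 v|| <= (2/c_lam) ||v|| for
  v = Z' Ubar / n.  The a-th coordinate of v is the average of the n independent, centred
  terms U_i F'(mu + m(X_i)) P_kappa(X_i)_a, whose second moment is at most the bound on
  E(U^2 | X) times the diagonal entry Q_aa <= C_Q.  Hence E ||v||^2 = O(d(kappa) / n), and
  Markov's inequality gives the O_p(kappa^(1/2) / n^(1/2)) bound.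

  F, F', m_j and p_k are not assumed measurable, so they are first replaced by Borel
  functions that agree with them at almost every observation.
*)
theory Submission
  imports Defs "HOL-Real_Asymp.Real_Asymp"
begin

section \<open>Rayleigh quotients of symmetric matrices\<close>

lemma scalar_prod_self_eq_sum_squares:
  fixes w :: "real vec"
  assumes "w \<in> carrier_vec n"
  shows "w \<bullet> w = (\<Sum>i<n. (w$i)^2)"
  using assms by (simp add: scalar_prod_def atLeast0LessThan power2_eq_square)

lemma scalar_prod_self_nonneg:
  fixes w :: "real vec"
  shows "0 \<le> w \<bullet> w"
  by (simp add: scalar_prod_def sum_nonneg)

lemma scalar_prod_self_eq_0_iff:
  fixes w :: "real vec"
  assumes "w \<in> carrier_vec n"
  shows "w \<bullet> w = 0 \<longleftrightarrow> w = 0\<^sub>v n"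
proof
  assume "w \<bullet> w = 0"
  then have "\<forall>i\<in>{..<n}. (w$i)^2 = 0"
    by (subst sum_nonneg_eq_0_iff[symmetric]) (auto simp: scalar_prod_self_eq_sum_squares[OF assms])
  then show "w = 0\<^sub>v n" using assms by (intro eq_vecI) auto
qed (use assms in simp)

lemma scalar_prod_mult_mat_vec_sum:
  fixes A :: "real mat"
  assumes "A \<in> carrier_mat n n" "u \<in> carrier_vec n" "v \<in> carrier_vec n"
  shows "u \<bullet> (A *\<^sub>v v) = (\<Sum>i<n. u$i * (\<Sum>j<n. A$$(i,j) * v$j))"
  using assms by (simp add: scalar_prod_def mult_mat_vec_def row_def atLeast0LessThan)

lemma vnorm_eq_sqrt_scalar_prod: "vnorm v = sqrt (v \<bullet> v)"
  unfolding vnorm_def by (simp add: scalar_prod_def atLeast0LessThan power2_eq_square)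

lemma compact_unit_sphere_finite_support:
  "compact {h::nat\<Rightarrow>real. (\<forall>i\<ge>n. h i = 0) \<and> (\<Sum>i<n. (h i)^2) = 1}" (is "compact ?S")
proof -
  let ?B = "PiE UNIV (\<lambda>i::nat. if i < n then {-1..1::real} else {0})"
  have "compactin (product_topology (\<lambda>_. euclidean) UNIV) ?B"
    by (subst compactin_PiE) auto
  then have B: "compact ?B"
    by (simp add: euclidean_product_topology compactin_euclidean_iff)
  have S: "closed ?S"
  proof -
    have "?S = (\<Inter>i\<in>{n..}. {h. h i = 0}) \<inter> {h. (\<Sum>i<n. (h i)^2) = 1}"
      by auto
    also have "closed \<dots>"
      by (intro closed_Int closed_INT ballI closed_Collect_eq continuous_on_product_coordinates
          continuous_on_const continuous_intros continuous_on_product_then_coordinatewise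
          continuous_on_id)
    finally show ?thesis .
  qed
  have "?S \<subseteq> ?B"
  proof
    fix h assume h: "h \<in> ?S"
    have "h i \<in> {-1..1}" if "i < n" for i
    proof -
      have "(h i)^2 \<le> (\<Sum>j<n. (h j)^2)"
        using that by (intro member_le_sum) auto
      then have "\<bar>h i\<bar> \<le> 1" using h by (simp add: abs_square_le_1)
      then show ?thesis by (auto dest: abs_le_D1 abs_le_D2)
    qed
    then show "h \<in> ?B" using h by (auto simp: PiE_iff)
  qed
  then show ?thesis
    using compact_Int_closed[OF B S] by (simp add: Int_absorb1)
qed

lemma quadratic_form_attains_min_on_unit_sphere:
  fixes A :: "real mat"
  assumes A: "A \<in> carrier_mat n n" and n: "0 < n"
  obtains w0 :: "real vec" where "w0 \<in> carrier_vec n" "w0 \<bullet> w0 = 1"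
    "\<And>w. w \<in> carrier_vec n \<Longrightarrow> w \<bullet> w = 1 \<Longrightarrow> w0 \<bullet> (A *\<^sub>v w0) \<le> w \<bullet> (A *\<^sub>v w)"
proof -
  define S where "S = {h::nat\<Rightarrow>real. (\<forall>i\<ge>n. h i = 0) \<and> (\<Sum>i<n. (h i)^2) = 1}"
  define q where "q = (\<lambda>h::nat\<Rightarrow>real. \<Sum>i<n. h i * (\<Sum>j<n. A$$(i,j) * h j))"
  have "(\<lambda>i. if i = 0 then 1 else 0) \<in> S"
    using n unfolding S_def by (simp add: power2_eq_square if_distrib sum.If_cases Int_absorb1 cong: if_cong)
  then have "S \<noteq> {}" by auto
  moreover have "continuous_on S q"
    unfolding q_def by (intro continuous_intros continuous_on_product_then_coordinatewise continuous_on_id)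
  ultimately obtain h0 where h0: "h0 \<in> S" and h0_min: "\<And>h. h \<in> S \<Longrightarrow> q h0 \<le> q h"
    using continuous_attains_inf[OF compact_unit_sphere_finite_support[of n, folded S_def]] by blast
  have q_vec: "x \<bullet> (A *\<^sub>v x) = q (\<lambda>i. if i < n then x$i else 0)" if "x \<in> carrier_vec n" for x
    using scalar_prod_mult_mat_vec_sum[OF A that that] by (simp add: q_def)
  show ?thesis
  proof
    show w0: "vec n h0 \<in> carrier_vec n" by simp
    show "vec n h0 \<bullet> vec n h0 = 1"
      using h0 by (simp add: scalar_prod_self_eq_sum_squares[OF w0] S_def)
    fix w :: "real vec" assume w: "w \<in> carrier_vec n" "w \<bullet> w = 1"
    have "(\<lambda>i. if i < n then vec n h0 $ i else 0) = h0"
      using h0 by (auto simp: S_def)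
    moreover have "(\<lambda>i. if i < n then w $ i else 0) \<in> S"
      using w by (simp add: S_def scalar_prod_self_eq_sum_squares)
    ultimately show "vec n h0 \<bullet> (A *\<^sub>v vec n h0) \<le> w \<bullet> (A *\<^sub>v w)"
      using h0_min q_vec[OF w0] q_vec[OF w(1)] by simp
  qed
qed

lemma quadratic_form_ge_if_ge_on_unit_sphere:
  fixes A :: "real mat"
  assumes A: "A \<in> carrier_mat n n"
    and unit: "\<And>w. w \<in> carrier_vec n \<Longrightarrow> w \<bullet> w = 1 \<Longrightarrow> c \<le> w \<bullet> (A *\<^sub>v w)"
    and x: "x \<in> carrier_vec n"
  shows "c * (x \<bullet> x) \<le> x \<bullet> (A *\<^sub>v x)"
proof (cases "x = 0\<^sub>v n")
  case True
  then show ?thesis using A by simp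
next
  case False
  define s where "s = x \<bullet> x"
  have s: "0 < s"
    using False scalar_prod_self_nonneg[of x] scalar_prod_self_eq_0_iff[OF x] by (simp add: s_def)
  define w where "w = (1 / sqrt s) \<cdot>\<^sub>v x"
  have "w \<in> carrier_vec n" "w \<bullet> w = 1"
    using x s by (simp_all add: w_def s_def real_sqrt_mult[symmetric])
  then have "c \<le> w \<bullet> (A *\<^sub>v w)" by (rule unit)
  also have "\<dots> = x \<bullet> (A *\<^sub>v x) / s"
    using x A s by (simp add: w_def mult_mat_vec real_sqrt_mult[symmetric])
  finally show ?thesis using s by (simp add: s_def field_simps)
qed

lemma symmetric_scalar_prod_mult_mat_vec_swap:
  fixes A :: "real mat"
  assumes A: "A \<in> carrier_mat n n"
    and sym: "\<And>i j. i < n \<Longrightarrow> j < n \<Longrightarrow> A$$(i,j) = A$$(j,i)"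
    and u: "u \<in> carrier_vec n" and v: "v \<in> carrier_vec n"
  shows "u \<bullet> (A *\<^sub>v v) = v \<bullet> (A *\<^sub>v u)"
proof -
  have "u \<bullet> (A *\<^sub>v v) = (\<Sum>i<n. \<Sum>j<n. u$i * A$$(i,j) * v$j)"
    using scalar_prod_mult_mat_vec_sum[OF A u v] by (simp add: sum_distrib_left mult.assoc)
  also have "\<dots> = (\<Sum>j<n. \<Sum>i<n. v$j * A$$(j,i) * u$i)"
    by (subst sum.swap) (intro sum.cong refl, simp add: sym)
  also have "\<dots> = v \<bullet> (A *\<^sub>v u)"
    using scalar_prod_mult_mat_vec_sum[OF A v u] by (simp add: sum_distrib_left mult.assoc)
  finally show ?thesis .
qed

lemma quadratic_form_add_smult:
  fixes A :: "real mat"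
  assumes A: "A \<in> carrier_mat n n"
    and sym: "\<And>i j. i < n \<Longrightarrow> j < n \<Longrightarrow> A$$(i,j) = A$$(j,i)"
    and u: "u \<in> carrier_vec n" and v: "v \<in> carrier_vec n"
  shows "(v + t \<cdot>\<^sub>v u) \<bullet> (A *\<^sub>v (v + t \<cdot>\<^sub>v u))
      = v \<bullet> (A *\<^sub>v v) + 2 * t * (u \<bullet> (A *\<^sub>v v)) + t^2 * (u \<bullet> (A *\<^sub>v u))"
proof -
  have "A *\<^sub>v (v + t \<cdot>\<^sub>v u) = A *\<^sub>v v + t \<cdot>\<^sub>v (A *\<^sub>v u)"
    using A u v by (simp add: mult_add_distrib_mat_vec mult_mat_vec)
  then show ?thesis
    using A u v symmetric_scalar_prod_mult_mat_vec_swap[OF A sym v u]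
    by (simp add: add_scalar_prod_distrib[of _ n] scalar_prod_add_distrib[of _ n] power2_eq_square
        algebra_simps)
qed

lemma linear_coeff_eq_0_if_quadratic_nonneg:
  fixes c d :: real
  assumes "\<And>t. 0 \<le> 2*t*c + t^2*d"
  shows "c = 0"
proof (rule ccontr)
  assume c: "c \<noteq> 0"
  define e where "e = \<bar>d\<bar> + 1"
  have e: "0 < e" by (simp add: e_def)
  define t where "t = - c / e"
  have "2*t*c + t^2*d \<le> 2*t*c + t^2*e"
    unfolding e_def by (intro add_left_mono mult_left_mono) auto
  also have "\<dots> = - (c^2 / e)"
    using e by (simp add: t_def field_simps power2_eq_square)
  also have "\<dots> < 0" using c e by simp
  finally show False using assms[of t] by simp
qed

lemma eigenvector_if_minimises_quadratic_form:
  fixes A :: "real mat" and w0 :: "real vec"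
  assumes A: "A \<in> carrier_mat n n"
    and sym: "\<And>i j. i < n \<Longrightarrow> j < n \<Longrightarrow> A$$(i,j) = A$$(j,i)"
    and w0: "w0 \<in> carrier_vec n" "w0 \<bullet> w0 = 1" "w0 \<bullet> (A *\<^sub>v w0) = c"
    and ge: "\<And>x. x \<in> carrier_vec n \<Longrightarrow> c * (x \<bullet> x) \<le> x \<bullet> (A *\<^sub>v x)"
  shows "A *\<^sub>v w0 = c \<cdot>\<^sub>v w0"
proof -
  define u where "u = A *\<^sub>v w0 - c \<cdot>\<^sub>v w0"
  have u: "u \<in> carrier_vec n" unfolding u_def using A w0 by simp
  have "u \<bullet> u = u \<bullet> (A *\<^sub>v w0 - c \<cdot>\<^sub>v w0)"
    by (subst (2) u_def) (rule refl)
  also have "\<dots> = u \<bullet> (A *\<^sub>v w0) - c * (u \<bullet> w0)"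
    using A w0 u by (simp add: scalar_prod_minus_distrib[of u n])
  finally have uu: "u \<bullet> u = u \<bullet> (A *\<^sub>v w0) - c * (u \<bullet> w0)" .
  \<comment> \<open>x \<bullet> A x - c x \<bullet> x is nonnegative and vanishes at w0, so its derivative
      at w0 in the direction u, which is 2 u \<bullet> u, is zero.\<close>
  have "0 \<le> 2*t*(u \<bullet> u) + t^2*(u \<bullet> (A *\<^sub>v u) - c * (u \<bullet> u))" for t
  proof -
    let ?x = "w0 + t \<cdot>\<^sub>v u"
    have x: "?x \<in> carrier_vec n" using w0 u by simp
    have "?x \<bullet> (A *\<^sub>v ?x) = c + 2*t*(u \<bullet> (A *\<^sub>v w0)) + t^2*(u \<bullet> (A *\<^sub>v u))"
      using quadratic_form_add_smult[OF A sym u w0(1), of t] w0(3) by simp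
    moreover have "?x \<bullet> ?x = ?x \<bullet> (1\<^sub>m n *\<^sub>v ?x)" using x by simp
    then have "?x \<bullet> ?x = 1 + 2*t*(u \<bullet> w0) + t^2*(u \<bullet> u)"
      using quadratic_form_add_smult[OF one_carrier_mat _ u w0(1), of t] w0 u by simp
    moreover have "2*t*(u \<bullet> u) + t^2*(u \<bullet> (A *\<^sub>v u) - c * (u \<bullet> u))
        = (c + 2*t*(u \<bullet> (A *\<^sub>v w0)) + t^2*(u \<bullet> (A *\<^sub>v u)))
          - c * (1 + 2*t*(u \<bullet> w0) + t^2*(u \<bullet> u))"
      by (simp add: uu algebra_simps)
    ultimately show ?thesis using ge[OF x] by simp
  qed
  then have "u \<bullet> u = 0"
    using linear_coeff_eq_0_if_quadratic_nonneg by blast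
  then have u0: "u = 0\<^sub>v n" using scalar_prod_self_eq_0_iff[OF u] by simp
  show ?thesis
  proof (rule eq_vecI)
    fix i assume i: "i < dim_vec (c \<cdot>\<^sub>v w0)"
    then have "u $ i = 0" using u0 w0 by simp
    then show "(A *\<^sub>v w0) $ i = (c \<cdot>\<^sub>v w0) $ i" using i A w0 by (simp add: u_def)
  qed (use A w0 in simp)
qed

lemma finite_eigenvalues:
  fixes A :: "real mat"
  assumes "A \<in> carrier_mat n n"
  shows "finite {e. eigenvalue A e}"
proof -
  have "char_poly A \<noteq> 0" using degree_monic_char_poly[OF assms] by auto
  then show ?thesis
    using poly_roots_finite eigenvalue_root_char_poly[OF assms] by simp
qed

lemma min_eig_mult_le_quadratic_form:
  fixes A :: "real mat"
  assumes A: "A \<in> carrier_mat n n"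
    and sym: "\<And>i j. i < n \<Longrightarrow> j < n \<Longrightarrow> A$$(i,j) = A$$(j,i)"
    and x: "x \<in> carrier_vec n"
  shows "min_eig A * (x \<bullet> x) \<le> x \<bullet> (A *\<^sub>v x)"
proof (cases "n = 0")
  case True
  then show ?thesis using x by (simp add: scalar_prod_def)
next
  case False
  obtain w0 :: "real vec" where w0: "w0 \<in> carrier_vec n" "w0 \<bullet> w0 = 1"
    and min: "\<And>w. w \<in> carrier_vec n \<Longrightarrow> w \<bullet> w = 1 \<Longrightarrow> w0 \<bullet> (A *\<^sub>v w0) \<le> w \<bullet> (A *\<^sub>v w)"
    using quadratic_form_attains_min_on_unit_sphere[OF A] False by blast
  define c where "c = w0 \<bullet> (A *\<^sub>v w0)"
  have ge: "c * (x \<bullet> x) \<le> x \<bullet> (A *\<^sub>v x)" if "x \<in> carrier_vec n" for x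
    using quadratic_form_ge_if_ge_on_unit_sphere[OF A min that] by (simp add: c_def)
  have "A *\<^sub>v w0 = c \<cdot>\<^sub>v w0"
    using eigenvector_if_minimises_quadratic_form[OF A sym w0 c_def[symmetric] ge] .
  moreover have "w0 \<noteq> 0\<^sub>v n" using w0 by auto
  ultimately have "eigenvalue A c"
    using A w0 by (auto simp: eigenvalue_def eigenvector_def)
  then have "min_eig A \<le> c"
    unfolding min_eig_def using finite_eigenvalues[OF A] by (intro Min_le) auto
  then have "min_eig A * (x \<bullet> x) \<le> c * (x \<bullet> x)"
    by (intro mult_right_mono scalar_prod_self_nonneg)
  with ge[OF x] show ?thesis by simp
qed

lemma min_eig_le_diag:
  fixes A :: "real mat"
  assumes A: "A \<in> carrier_mat n n"
    and sym: "\<And>i j. i < n \<Longrightarrow> j < n \<Longrightarrow> A$$(i,j) = A$$(j,i)"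
    and a: "a < n"
  shows "min_eig A \<le> A$$(a,a)"
  using min_eig_mult_le_quadratic_form[OF A sym unit_vec_carrier[of n a]] A a
  by (simp add: mult_mat_vec_def)

lemma scalar_prod_le_weighted_squares:
  fixes u v :: "real vec"
  assumes u: "u \<in> carrier_vec n" and v: "v \<in> carrier_vec n" and l: "0 < l"
  shows "u \<bullet> v \<le> l/2 * (u \<bullet> u) + (v \<bullet> v) / (2*l)"
proof -
  have "u$i * v$i \<le> l/2 * (u$i)^2 + (v$i)^2 / (2*l)" for i
  proof -
    have "0 \<le> (l * u$i - v$i)^2" by simp
    then show ?thesis using l by (simp add: field_simps power2_eq_square)
  qed
  then have "(\<Sum>i<n. u$i * v$i) \<le> (\<Sum>i<n. l/2 * (u$i)^2 + (v$i)^2 / (2*l))"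
    by (intro sum_mono)
  also have "\<dots> = l/2 * (u \<bullet> u) + (v \<bullet> v) / (2*l)"
    unfolding scalar_prod_self_eq_sum_squares[OF u] scalar_prod_self_eq_sum_squares[OF v]
    by (simp add: sum.distrib sum_distrib_left sum_divide_distrib)
  finally show ?thesis
    using u v by (simp add: scalar_prod_def atLeast0LessThan)
qed

lemma vnorm_mat_inverse_mult_le:
  fixes A :: "real mat"
  assumes A: "A \<in> carrier_mat n n"
    and sym: "\<And>i j. i < n \<Longrightarrow> j < n \<Longrightarrow> A$$(i,j) = A$$(j,i)"
    and l: "0 < l" "l \<le> min_eig A" and v: "v \<in> carrier_vec n"
  shows "vnorm (the (mat_inverse A) *\<^sub>v v) \<le> vnorm v / l"
proof -
  have pos: "l * (x \<bullet> x) \<le> x \<bullet> (A *\<^sub>v x)" if "x \<in> carrier_vec n" for x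
    using min_eig_mult_le_quadratic_form[OF A sym that] l(2)
      mult_right_mono[OF l(2) scalar_prod_self_nonneg[of x]] by linarith
  have "det A \<noteq> 0"
  proof
    assume "det A = 0"
    then obtain x where x: "x \<in> carrier_vec n" "x \<noteq> 0\<^sub>v n" "A *\<^sub>v x = 0\<^sub>v n"
      using det_0_iff_vec_prod_zero[OF A] by blast
    then have "x \<bullet> x \<le> 0" using pos[OF x(1)] l(1) by (simp add: mult_le_0_iff)
    then show False
      using x scalar_prod_self_eq_0_iff[OF x(1)] scalar_prod_self_nonneg[of x] by simp
  qed
  then have "A \<in> Units (ring_mat TYPE(real) n n)" by (rule det_non_zero_imp_unit[OF A])
  then obtain B where B: "mat_inverse A = Some B"
    using mat_inverse(1)[OF A] by fastforce
  have AB: "A * B = 1\<^sub>m n" and Bc: "B \<in> carrier_mat n n"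
    using mat_inverse(2)[OF A B] by auto
  define u where "u = B *\<^sub>v v"
  have u: "u \<in> carrier_vec n" unfolding u_def using Bc v by simp
  have "A *\<^sub>v u = v" unfolding u_def using A Bc v AB
    by (metis assoc_mult_mat_vec one_mult_mat_vec)
  then have "l * (u \<bullet> u) \<le> u \<bullet> v" using pos[OF u] by simp
  also have "\<dots> \<le> l/2 * (u \<bullet> u) + (v \<bullet> v) / (2*l)"
    by (rule scalar_prod_le_weighted_squares[OF u v l(1)])
  finally have "u \<bullet> u \<le> (v \<bullet> v) / l^2"
    using l(1) by (simp add: field_simps power2_eq_square)
  then have "sqrt (u \<bullet> u) \<le> sqrt ((v \<bullet> v) / l^2)"
    by (rule real_sqrt_le_mono)
  also have "\<dots> = sqrt (v \<bullet> v) / l"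
    using l(1) by (simp add: real_sqrt_divide)
  finally have "sqrt (u \<bullet> u) \<le> sqrt (v \<bullet> v) / l" .
  then show ?thesis using B by (simp add: u_def vnorm_eq_sqrt_scalar_prod)
qed

section \<open>Conditional second moments\<close>

context sigma_finite_subalgebra
begin

lemma real_cond_exp_nonneg_eq:
  assumes "\<And>x. 0 \<le> f x"
  shows "AE x in M. real_cond_exp M F f x = enn2real (nn_cond_exp M F (\<lambda>x. ennreal (f x)) x)"
proof -
  have "(\<lambda>x. ennreal (- f x)) = (\<lambda>x. 0)"
    using assms by (auto simp: ennreal_neg)
  moreover have "AE x in M. nn_cond_exp M F (\<lambda>x. 0) x = 0"
    using nn_cond_exp_F_meas[of "\<lambda>x. 0"] by auto
  ultimately show ?thesis
    unfolding real_cond_exp_def by auto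
qed

lemma twice_sq_pos_part_le_real_cond_exp_sq:
  assumes T: "integrable M T" "integrable M (\<lambda>x. (T x)^2)"
    and T0: "AE x in M. real_cond_exp M F T x = 0"
  shows "AE x in M. 2 * (enn2real (nn_cond_exp M F (\<lambda>x. ennreal (T x)) x))^2
                      \<le> real_cond_exp M F (\<lambda>x. (T x)^2) x"
proof -
  define Tp where "Tp = (\<lambda>x. max 0 (T x))"
  define Tn where "Tn = (\<lambda>x. max 0 (- T x))"
  define bp where "bp = (\<lambda>x. enn2real (nn_cond_exp M F (\<lambda>x. ennreal (T x)) x))"
  define bn where "bn = (\<lambda>x. enn2real (nn_cond_exp M F (\<lambda>x. ennreal (- T x)) x))"
  have sq_le: "AE x in M. (real_cond_exp M F S x)^2 \<le> real_cond_exp M F (\<lambda>x. (S x)^2) x"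
    if "integrable M S" "integrable M (\<lambda>x. (S x)^2)" for S
    using that
    by (intro real_cond_exp_jensens_inequality(2)[where I=UNIV])
       (auto intro!: convex_on_realI[where f'="\<lambda>x. 2*x"] derivative_eq_intros)
  have "integrable M (\<lambda>x. (Tp x)^2)" "integrable M (\<lambda>x. (Tn x)^2)"
    using T(1) by (auto simp: Tp_def Tn_def power2_eq_square max_def
        intro!: Bochner_Integration.integrable_bound[OF T(2)] AE_I2)
  then have Tp: "integrable M Tp" "integrable M (\<lambda>x. (Tp x)^2)"
    and Tn: "integrable M Tn" "integrable M (\<lambda>x. (Tn x)^2)"
    using T(1) by (auto simp: Tp_def Tn_def)
  \<comment> \<open>As E(T | F) = 0, Tp and Tn have the same conditional mean bp; Jensen for each part
      then gives 2 bp^2 \<le> E(Tp^2 | F) + E(Tn^2 | F) = E(T^2 | F).\<close>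
  have "AE x in M. bp x = bn x"
    using T0 unfolding real_cond_exp_def bp_def bn_def by auto
  moreover have "AE x in M. real_cond_exp M F Tp x = bp x"
    using real_cond_exp_nonneg_eq[of Tp] by (simp add: Tp_def bp_def ennreal_max_0)
  moreover have "AE x in M. real_cond_exp M F Tn x = bn x"
    using real_cond_exp_nonneg_eq[of Tn] by (simp add: Tn_def bn_def ennreal_max_0)
  moreover have "AE x in M. real_cond_exp M F (\<lambda>x. (T x)^2) x
      = real_cond_exp M F (\<lambda>x. (Tp x)^2) x + real_cond_exp M F (\<lambda>x. (Tn x)^2) x"
  proof -
    have "(\<lambda>x. (T x)^2) = (\<lambda>x. (Tp x)^2 + (Tn x)^2)"
      by (auto simp: Tp_def Tn_def max_def power2_eq_square)
    then show ?thesis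
      using real_cond_exp_add[OF Tp(2) Tn(2)] by simp
  qed
  ultimately show ?thesis
    using sq_le[OF Tp] sq_le[OF Tn] by eventually_elim (simp add: bp_def)
qed

text \<open>No measurability of U is assumed: if the positive or negative part of U is not
  measurable, the corresponding half of its real_cond_exp is the junk value 0.  Either way
  the result is bounded by the conditional positive part of T; this is what costs the
  factor 2 in the next lemma.\<close>

lemma real_cond_exp_sq_le_sq_pos_part_if_ae_eq:
  assumes UT: "AE x in M. U x = T x"
    and T: "T \<in> borel_measurable M"
    and T0: "AE x in M. real_cond_exp M F T x = 0"
  shows "AE x in M. (real_cond_exp M F U x)^2
                      \<le> (enn2real (nn_cond_exp M F (\<lambda>x. ennreal (T x)) x))^2"
proof -
  define bp where "bp = (\<lambda>x. enn2real (nn_cond_exp M F (\<lambda>x. ennreal (T x)) x))"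
  define bn where "bn = (\<lambda>x. enn2real (nn_cond_exp M F (\<lambda>x. ennreal (- T x)) x))"
  have part: "AE x in M. enn2real (nn_cond_exp M F (\<lambda>x. ennreal (s * U x)) x)
      \<in> {enn2real (nn_cond_exp M F (\<lambda>x. ennreal (s * T x)) x), 0}" for s :: real
  proof (cases "(\<lambda>x. ennreal (s * U x)) \<in> borel_measurable M")
    case True
    have "AE x in M. ennreal (s * U x) = ennreal (s * T x)"
      using UT by auto
    from nn_cond_exp_cong[OF this True] show ?thesis
      using T by auto
  qed (simp add: nn_cond_exp_def)
  have "AE x in M. bp x = bn x"
    using T0 unfolding real_cond_exp_def bp_def bn_def by auto
  then show ?thesis
    using part[of 1] part[of "-1"]
    by eventually_elim (auto simp: real_cond_exp_def bp_def bn_def power2_eq_square)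
qed

lemma real_cond_exp_sq_le_twice_if_cond_var_le:
  assumes T: "integrable M T" "integrable M (\<lambda>x. (T x)^2)"
    and T0: "AE x in M. real_cond_exp M F T x = 0"
    and UT: "AE x in M. U x = T x" and U2: "(\<lambda>x. (U x)^2) \<in> borel_measurable M"
    and W: "AE x in M. W x = real_cond_exp M F (\<lambda>x. (U x)^2) x - (real_cond_exp M F U x)^2"
    and W_le: "AE x in M. W x \<le> C"
  shows "AE x in M. real_cond_exp M F (\<lambda>x. (T x)^2) x \<le> 2 * C"
proof -
  have "AE x in M. (U x)^2 = (T x)^2" using UT by auto
  then have "AE x in M. real_cond_exp M F (\<lambda>x. (U x)^2) x = real_cond_exp M F (\<lambda>x. (T x)^2) x"
    using U2 T(2) by (intro real_cond_exp_cong) auto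
  then show ?thesis
    using twice_sq_pos_part_le_real_cond_exp_sq[OF T T0] W W_le
      real_cond_exp_sq_le_sq_pos_part_if_ae_eq[OF UT borel_measurable_integrable[OF T(1)] T0]
    by eventually_elim auto
qed

lemma integrable_sq_mult_if_real_cond_exp_sq_le:
  assumes T: "T \<in> borel_measurable M" "integrable M (\<lambda>x. (T x)^2)"
    and T2_le: "AE x in M. real_cond_exp M F (\<lambda>x. (T x)^2) x \<le> K" and K: "0 \<le> K"
    and \<psi>: "\<psi> \<in> borel_measurable F" "integrable M (\<lambda>x. (\<psi> x)^2)"
  shows "integrable M (\<lambda>x. (T x * \<psi> x)^2)"
    and "(\<integral>x. (T x * \<psi> x)^2 \<partial>M) \<le> K * (\<integral>x. (\<psi> x)^2 \<partial>M)"
proof -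
  define N where "N = nn_cond_exp M F (\<lambda>x. ennreal ((T x)^2))"
  have "(\<integral>\<^sup>+x. 1 * N x \<partial>M) = (\<integral>\<^sup>+x. 1 * ennreal ((T x)^2) \<partial>M)"
    unfolding N_def using T(1) by (intro nn_cond_exp_intg) auto
  then have "integral\<^sup>N M N \<noteq> \<infinity>"
    using nn_integral_eq_integral[OF T(2)] by simp
  then have "AE x in M. N x \<noteq> \<infinity>"
    by (intro nn_integral_PInf_AE) (auto simp: N_def)
  then have N_le: "AE x in M. N x \<le> ennreal K"
    using real_cond_exp_nonneg_eq[of "\<lambda>x. (T x)^2", OF zero_le_power2] T2_le
  proof eventually_elim
    case (elim x)
    then have "N x = ennreal (enn2real (N x))" by (simp add: ennreal_enn2real_if)
    also have "\<dots> \<le> ennreal K" using elim by (intro ennreal_leI) (simp add: N_def)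
    finally show ?case .
  qed
  have "(\<integral>\<^sup>+x. ennreal ((T x * \<psi> x)^2) \<partial>M) = (\<integral>\<^sup>+x. ennreal ((\<psi> x)^2) * ennreal ((T x)^2) \<partial>M)"
    by (intro nn_integral_cong) (simp add: ennreal_mult'[symmetric] power_mult_distrib mult.commute)
  also have "\<dots> = (\<integral>\<^sup>+x. ennreal ((\<psi> x)^2) * N x \<partial>M)"
    unfolding N_def using T(1) \<psi>(1) by (intro nn_cond_exp_intg[symmetric]) auto
  also have "\<dots> \<le> (\<integral>\<^sup>+x. ennreal K * ennreal ((\<psi> x)^2) \<partial>M)"
    using N_le by (intro nn_integral_mono_AE, eventually_elim) (auto simp: mult.commute intro: mult_right_mono)
  also have "\<dots> = ennreal K * ennreal (\<integral>x. (\<psi> x)^2 \<partial>M)"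
    using \<psi> measurable_from_subalg[OF subalg]
    by (subst nn_integral_cmult) (auto simp: nn_integral_eq_integral[OF \<psi>(2)])
  also have "\<dots> = ennreal (K * (\<integral>x. (\<psi> x)^2 \<partial>M))"
    using K by (simp add: ennreal_mult)
  finally have bound: "(\<integral>\<^sup>+x. ennreal ((T x * \<psi> x)^2) \<partial>M) \<le> ennreal (K * (\<integral>x. (\<psi> x)^2 \<partial>M))" .
  have \<psi>M: "\<psi> \<in> borel_measurable M" using \<psi>(1) measurable_from_subalg[OF subalg] by blast
  show int: "integrable M (\<lambda>x. (T x * \<psi> x)^2)"
    using bound T(1) \<psi>M by (intro integrableI_bounded) (auto simp: top.not_eq_extremum le_less_trans)
  show "(\<integral>x. (T x * \<psi> x)^2 \<partial>M) \<le> K * (\<integral>x. (\<psi> x)^2 \<partial>M)"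
    using bound nn_integral_eq_integral[OF int] K by (simp add: ennreal_le_iff)
qed

lemma integral_mult_eq_0_if_real_cond_exp_eq_0:
  assumes T: "T \<in> borel_measurable M" and T0: "AE x in M. real_cond_exp M F T x = 0"
    and \<psi>: "\<psi> \<in> borel_measurable F" and int: "integrable M (\<lambda>x. T x * \<psi> x)"
  shows "(\<integral>x. T x * \<psi> x \<partial>M) = 0"
proof -
  have "(\<integral>x. T x * \<psi> x \<partial>M) = (\<integral>x. \<psi> x * real_cond_exp M F T x \<partial>M)"
    using int T \<psi> by (subst real_cond_exp_intg(2)) (auto simp: mult.commute)
  also have "\<dots> = (\<integral>x. 0 \<partial>M)"
  proof (rule integral_cong_AE)
    show "(\<lambda>x. \<psi> x * real_cond_exp M F T x) \<in> borel_measurable M"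
      using \<psi> measurable_from_subalg[OF subalg] by (intro borel_measurable_times) auto
  qed (use T0 in auto)
  also have "\<dots> = 0" by simp
  finally show ?thesis .
qed

end

section \<open>Independent sums and stochastic order\<close>

lemma (in prob_space) indep_var_if_indep_vars:
  assumes ind: "indep_vars N X I" and ij: "i \<in> I" "j \<in> I" "i \<noteq> j"
  shows "indep_var (N i) (X i) (N j) (X j)"
proof -
  have "indep_var (PiM {i} N) (\<lambda>\<omega>. restrict (\<lambda>k. X k \<omega>) {i})
                  (PiM {j} N) (\<lambda>\<omega>. restrict (\<lambda>k. X k \<omega>) {j})"
    using ij by (intro indep_var_restrict[OF ind]) auto
  then have "indep_var (N i) ((\<lambda>f. f i) \<circ> (\<lambda>\<omega>. restrict (\<lambda>k. X k \<omega>) {i}))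
                       (N j) ((\<lambda>f. f j) \<circ> (\<lambda>\<omega>. restrict (\<lambda>k. X k \<omega>) {j}))"
    by (rule indep_var_compose) (auto intro: measurable_component_singleton)
  then show ?thesis by (simp add: comp_def)
qed

lemma (in prob_space) integral_sum_sq_indep_mean_zero:
  fixes W :: "nat \<Rightarrow> 'a \<Rightarrow> real"
  assumes ind: "indep_vars (\<lambda>_. borel) W UNIV"
    and W2: "\<And>i. integrable M (\<lambda>\<omega>. (W i \<omega>)^2)"
    and W0: "\<And>i. (\<integral>\<omega>. W i \<omega> \<partial>M) = 0"
  shows "integrable M (\<lambda>\<omega>. (\<Sum>i<n. W i \<omega>)^2)"
    and "(\<integral>\<omega>. (\<Sum>i<n. W i \<omega>)^2 \<partial>M) = (\<Sum>i<n. \<integral>\<omega>. (W i \<omega>)^2 \<partial>M)"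
proof -
  have W: "integrable M (W i)" for i
  proof (rule square_integrable_imp_integrable[OF _ W2])
    show "W i \<in> borel_measurable M" using ind unfolding indep_vars_def by blast
  qed
  have sq: "(\<lambda>\<omega>. (\<Sum>i<n. W i \<omega>)^2) = (\<lambda>\<omega>. \<Sum>i<n. \<Sum>j<n. W i \<omega> * W j \<omega>)"
    by (simp add: power2_eq_square sum_product)
  have cross: "integrable M (\<lambda>\<omega>. W i \<omega> * W j \<omega>) \<and>
      (\<integral>\<omega>. W i \<omega> * W j \<omega> \<partial>M) = (if i = j then \<integral>\<omega>. (W i \<omega>)^2 \<partial>M else 0)" for i j
  proof (cases "i = j")
    case True
    then show ?thesis using W2[of i] by (simp add: power2_eq_square)
  next
    case False
    then have indep: "indep_var borel (W i) borel (W j)"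
      by (intro indep_var_if_indep_vars[OF ind]) auto
    show ?thesis
      using indep_var_integrable[OF indep W W] indep_var_lebesgue_integral[OF indep W W] W0 False
      by simp
  qed
  show "integrable M (\<lambda>\<omega>. (\<Sum>i<n. W i \<omega>)^2)"
    unfolding sq using cross by auto
  show "(\<integral>\<omega>. (\<Sum>i<n. W i \<omega>)^2 \<partial>M) = (\<Sum>i<n. \<integral>\<omega>. (W i \<omega>)^2 \<partial>M)"
    unfolding sq using cross by (simp add: Bochner_Integration.integral_sum sum.delta)
qed

lemma (in prob_space) Markov_inequality_sqrt_bound:
  fixes T S :: "'a \<Rightarrow> real"
  assumes S: "integrable M S" "\<And>\<omega>. 0 \<le> S \<omega>" and T: "AE \<omega> in M. \<bar>T \<omega>\<bar> \<le> sqrt (S \<omega>)"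
    and c: "0 < c"
  shows "\<exists>A\<in>sets M. {\<omega> \<in> space M. c < \<bar>T \<omega>\<bar>} \<subseteq> A
    \<and> measure M A \<le> (\<integral>\<omega>. S \<omega> \<partial>M) / c^2"
proof -
  obtain Z where Z: "{\<omega> \<in> space M. \<not> \<bar>T \<omega>\<bar> \<le> sqrt (S \<omega>)} \<subseteq> Z" "Z \<in> null_sets M"
    using T by (auto elim!: AE_E simp: null_sets_def)
  define A where "A = Z \<union> {\<omega> \<in> space M. c^2 \<le> S \<omega>}"
  have S_meas: "S \<in> borel_measurable M" using S by auto
  have "A \<in> sets M" using Z S_meas by (auto simp: A_def)
  moreover have "{\<omega> \<in> space M. c < \<bar>T \<omega>\<bar>} \<subseteq> A"
  proof
    fix \<omega> assume \<omega>: "\<omega> \<in> {\<omega> \<in> space M. c < \<bar>T \<omega>\<bar>}"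
    show "\<omega> \<in> A"
    proof (cases "\<omega> \<in> Z")
      case False
      then have "c < sqrt (S \<omega>)" using \<omega> Z by force
      then have "c^2 < (sqrt (S \<omega>))^2" using c by (intro power_strict_mono) auto
      then show ?thesis using \<omega> S(2)[of \<omega>] by (simp add: A_def)
    qed (simp add: A_def)
  qed
  moreover have "measure M A \<le> measure M Z + measure M {\<omega> \<in> space M. c^2 \<le> S \<omega>}"
    unfolding A_def using Z S_meas by (intro measure_Un_le) auto
  moreover have "measure M {\<omega> \<in> space M. c^2 \<le> S \<omega>} \<le> (\<integral>\<omega>. S \<omega> \<partial>M) / c^2"
    using S c by (intro integral_Markov_inequality_measure) auto
  moreover have "measure M Z = 0"
    using Z by (simp add: measure_eq_0_null_sets)
  ultimately show ?thesis by auto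
qed

lemma (in prob_space) bigOp_if_second_moment_le:
  fixes T S :: "nat \<Rightarrow> 'a \<Rightarrow> real" and a :: "nat \<Rightarrow> real"
  assumes "eventually (\<lambda>n. 0 < a n \<and> integrable M (S n) \<and> (\<forall>\<omega>. 0 \<le> S n \<omega>)
      \<and> (\<integral>\<omega>. S n \<omega> \<partial>M) \<le> K * (a n)^2 \<and> (AE \<omega> in M. \<bar>T n \<omega>\<bar> \<le> sqrt (S n \<omega>))) sequentially"
  shows "bigOp M T a"
  unfolding bigOp_def
proof (intro allI impI)
  fix \<epsilon> :: real assume \<epsilon>: "0 < \<epsilon>"
  define C where "C = sqrt ((\<bar>K\<bar> + 1) / \<epsilon>)"
  have C: "0 < C" "C^2 = (\<bar>K\<bar> + 1) / \<epsilon>"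
    using \<epsilon> by (simp_all add: C_def)
  obtain N where N: "\<And>n. N \<le> n \<Longrightarrow> 0 < a n \<and> integrable M (S n) \<and> (\<forall>\<omega>. 0 \<le> S n \<omega>)
      \<and> (\<integral>\<omega>. S n \<omega> \<partial>M) \<le> K * (a n)^2 \<and> (AE \<omega> in M. \<bar>T n \<omega>\<bar> \<le> sqrt (S n \<omega>))"
    using assms by (auto simp: eventually_sequentially)
  have "\<exists>A\<in>sets M. {\<omega> \<in> space M. C * a n < \<bar>T n \<omega>\<bar>} \<subseteq> A \<and> measure M A < \<epsilon>"
    if n: "N \<le> n" for n
  proof -
    note Sn = N[OF n]
    have "0 < C * a n" using Sn C by simp
    then obtain A where A: "A \<in> sets M" "{\<omega> \<in> space M. C * a n < \<bar>T n \<omega>\<bar>} \<subseteq> A"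
      "measure M A \<le> (\<integral>\<omega>. S n \<omega> \<partial>M) / (C * a n)^2"
      using Markov_inequality_sqrt_bound[of "S n" "T n" "C * a n"] Sn by auto
    note A(3)
    also have "\<dots> \<le> K * (a n)^2 / (C * a n)^2"
      using Sn by (intro divide_right_mono) auto
    also have "\<dots> = K * \<epsilon> / (\<bar>K\<bar> + 1)"
      using Sn C \<epsilon> by (simp add: power_mult_distrib field_simps)
    also have "\<dots> < \<epsilon>"
      using mult_strict_right_mono[of K "\<bar>K\<bar> + 1" \<epsilon>] \<epsilon> by (simp add: field_simps)
    finally show ?thesis using A(1,2) by blast
  qed
  then show "\<exists>C N. \<forall>n\<ge>N. \<exists>A\<in>sets M. {\<omega> \<in> space M. C * a n < \<bar>T n \<omega>\<bar>} \<subseteq> A \<and> measure M A < \<epsilon>"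
    by blast
qed

lemma eventually_nat_floor_powr_ge_1:
  fixes C r :: real
  assumes "0 < C" "0 < r"
  shows "eventually (\<lambda>n. 1 \<le> nat \<lfloor>C * real n powr r\<rfloor>) sequentially"
proof -
  have "filterlim (\<lambda>n. C * real n powr r) at_top sequentially"
    using assms by real_asymp
  then have "eventually (\<lambda>n. 1 \<le> C * real n powr r) sequentially"
    by (simp add: filterlim_at_top)
  then show ?thesis
    by eventually_elim linarith
qed

section \<open>Borel versions of the model functions\<close>

lemma cart_coordinate_preimage_null:
  fixes E :: "real set" and j :: "'n::finite"
  assumes E: "E \<in> null_sets lborel"
  shows "{x::real^'n. x$j \<in> E} \<in> null_sets lborel"
proof -
  define e :: "real^'n" where "e = axis j 1"
  have e: "e \<in> Basis" unfolding e_def by simp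
  have E_borel[measurable]: "E \<in> sets borel" using E by (simp add: null_sets_def)
  define S where "S = (\<lambda>b::real^'n. if b = e then E else UNIV)"
  have S_borel: "\<And>b. indicator (S b) \<in> borel_measurable (borel :: real measure)"
    unfolding S_def by auto
  have ind: "(indicator {x::real^'n. x$j \<in> E} x :: ennreal) = (\<Prod>b\<in>Basis. indicator (S b) (x \<bullet> b))" for x
  proof -
    have "(\<Prod>b\<in>Basis. (indicator (S b) (x \<bullet> b) :: ennreal))
        = (\<Prod>b\<in>Basis. if b = e then indicator E (x \<bullet> b) else 1)"
      by (intro prod.cong refl) (auto simp: S_def)
    also have "\<dots> = indicator E (x \<bullet> e)" using e by (simp add: prod.delta)
    finally show ?thesis
      by (simp add: e_def cart_eq_inner_axis[symmetric] indicator_def)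
  qed
  have meas: "{x::real^'n. x$j \<in> E} \<in> sets lborel" by measurable
  have "emeasure lborel {x::real^'n. x$j \<in> E} = (\<integral>\<^sup>+x. (\<Prod>b\<in>Basis. indicator (S b) (x \<bullet> b)) \<partial>lborel)"
    using meas by (simp add: ind[symmetric])
  also have "\<dots> = (\<Prod>b\<in>Basis. (\<integral>\<^sup>+x. indicator (S b) x \<partial>lborel))"
    using S_borel by (intro nn_integral_lborel_prod) auto
  also have "\<dots> = 0"
    using e E by (intro prod_zero bexI[of _ e]) (auto simp: S_def null_sets_def)
  finally show ?thesis using meas by (simp add: null_sets_def)
qed

lemma borel_version_on_interval:
  fixes f :: "real \<Rightarrow> real"
  assumes "f integrable_on {a..b}"
  obtains g N where "g \<in> borel_measurable borel" "N \<in> null_sets lborel"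
    "\<And>t. t \<in> {a..b} \<Longrightarrow> t \<notin> N \<Longrightarrow> f t = g t"
proof -
  have "f \<in> borel_measurable (lebesgue_on {a..b})"
    by (rule integrable_imp_measurable[OF assms])
  then have "(\<lambda>t. if t \<in> {a..b} then f t else 0) \<in> borel_measurable lebesgue"
    by (rule borel_measurable_if_I) auto
  then have "(\<lambda>t. if t \<in> {a..b} then f t else 0) \<in> borel_measurable (completion lborel)"
    by simp
  then obtain g where g: "g \<in> borel_measurable lborel"
    and ae: "AE t in lborel. (if t \<in> {a..b} then f t else 0) = g t"
    using completion_ex_borel_measurable_real by blast
  obtain N where "{t \<in> space lborel. (if t \<in> {a..b} then f t else 0) \<noteq> g t} \<subseteq> N"
      "emeasure lborel N = 0" "N \<in> sets lborel"
    using ae by (rule AE_E)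
  then show ?thesis
    using g by (intro that[of g N]) (force simp: measurable_lborel1 null_setsI)+
qed

lemma continuous_on_clamp:
  fixes f :: "real \<Rightarrow> real"
  assumes "continuous_on {a..b} f" "a \<le> b"
  shows "continuous_on UNIV (\<lambda>t. f (max a (min b t)))"
  using assms by (intro continuous_on_compose2[OF assms(1)] continuous_intros) auto

lemma mem_cube_iff: "x \<in> cube \<longleftrightarrow> (\<forall>j. x$j \<in> {-1..1})"
  by (auto simp: cube_def mem_box_cart)

lemma exists_Pvec_borel_version:
  fixes p :: "nat \<Rightarrow> real \<Rightarrow> real"
  assumes p: "\<And>k. 1 \<le> k \<Longrightarrow> p k integrable_on {-1..1}"
  obtains Gd :: "(real^'d::finite) set" and Pe
  where "Gd \<in> sets borel" "Gd \<subseteq> cube" "AE x in lborel. x \<in> cube \<longrightarrow> x \<in> Gd"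
    "\<And>\<kappa> a. Pe \<kappa> a \<in> borel_measurable borel"
    "\<And>x \<kappa> a. x \<in> Gd \<Longrightarrow> a < \<kappa> * CARD('d) + 1 \<Longrightarrow> Pvec p \<kappa> x $ a = Pe \<kappa> a x"
proof -
  have "\<exists>g N. g \<in> borel_measurable borel \<and> N \<in> null_sets lborel
      \<and> (1 \<le> k \<longrightarrow> (\<forall>t\<in>{-1..1}. t \<notin> N \<longrightarrow> p k t = g t))" for k
  proof (cases "1 \<le> k")
    case True
    then show ?thesis
      using borel_version_on_interval[OF p[OF True]] by metis
  qed (auto intro!: exI[of _ "\<lambda>_. 0"])
  then obtain g N where g: "\<And>k. g k \<in> borel_measurable borel" and N: "\<And>k. N k \<in> null_sets lborel"
    and pg: "\<And>k t. 1 \<le> k \<Longrightarrow> t \<in> {-1..1} \<Longrightarrow> t \<notin> N k \<Longrightarrow> p k t = g k t"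
    by metis
  define Gd :: "(real^'d) set" where "Gd = cube \<inter> {x. \<forall>k j. x$j \<notin> N k}"
  define Pe where "Pe = (\<lambda>\<kappa> a (x::real^'d).
    if a = 0 then 1 else g ((a - 1) mod \<kappa> + 1) (x $ coord ((a - 1) div \<kappa>)))"
  show ?thesis
  proof
    have [measurable]: "N k \<in> sets borel" for k using N[of k] by (simp add: null_sets_def)
    have "cube \<in> sets (borel :: (real^'d) measure)" by (simp add: cube_def)
    then show "Gd \<in> sets borel" unfolding Gd_def by measurable
    show "Gd \<subseteq> cube" by (simp add: Gd_def)
    have "AE x in lborel. \<forall>j\<in>UNIV. (x::real^'d)$j \<notin> N k" for k
      using AE_not_in[OF cart_coordinate_preimage_null[OF N]] by (intro AE_finite_allI) auto
    then have "AE x in lborel. \<forall>k. \<forall>j. (x::real^'d)$j \<notin> N k"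
      by (simp add: AE_all_countable)
    then show "AE x in lborel. x \<in> cube \<longrightarrow> x \<in> Gd"
      by eventually_elim (simp add: Gd_def)
    show "Pe \<kappa> a \<in> borel_measurable borel" for \<kappa> a
      unfolding Pe_def using g by measurable
    show "Pvec p \<kappa> x $ a = Pe \<kappa> a x" if x: "x \<in> Gd" and a: "a < \<kappa> * CARD('d) + 1" for x \<kappa> a
    proof -
      define j :: 'd where "j = coord ((a - 1) div \<kappa>)"
      have "x$j \<in> {-1..1}" "\<forall>k. x$j \<notin> N k"
        using x by (auto simp: Gd_def mem_cube_iff)
      then show ?thesis
        using a pg[of "(a - 1) mod \<kappa> + 1" "x$j"] by (simp add: Pvec_def Pe_def j_def)
    qed
  qed
qed

section \<open>The additive model with known link\<close>

lemma Qmat_carrier: "Qmat M X F' \<mu> mj p \<kappa> \<in> carrier_mat (\<kappa> * CARD('d) + 1) (\<kappa> * CARD('d) + 1)"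
  for X :: "'a \<Rightarrow> real^'d::finite"
  by (simp add: Qmat_def)

lemma Qmat_symmetric:
  fixes X :: "'a \<Rightarrow> real^'d::finite"
  assumes "i < \<kappa> * CARD('d) + 1" "j < \<kappa> * CARD('d) + 1"
  shows "Qmat M X F' \<mu> mj p \<kappa> $$ (i, j) = Qmat M X F' \<mu> mj p \<kappa> $$ (j, i)"
  using assms by (simp add: Qmat_def mult_ac)

lemma Zmat_carrier: "Zmat F' \<mu> mj p \<kappa> X n \<omega> \<in> carrier_mat n (\<kappa> * CARD('d) + 1)"
  for X :: "nat \<Rightarrow> 'a \<Rightarrow> real^'d::finite"
  by (simp add: Zmat_def)

lemma Qhat_carrier: "Qhat F' \<mu> mj p \<kappa> X n \<omega> \<in> carrier_mat (\<kappa> * CARD('d) + 1) (\<kappa> * CARD('d) + 1)"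
  for X :: "nat \<Rightarrow> 'a \<Rightarrow> real^'d::finite"
  using Zmat_carrier[of F' \<mu> mj p \<kappa> X n \<omega>] by (simp add: Qhat_def)

lemma Qhat_symmetric:
  fixes X :: "nat \<Rightarrow> 'a \<Rightarrow> real^'d::finite"
  assumes "i < \<kappa> * CARD('d) + 1" "j < \<kappa> * CARD('d) + 1"
  shows "Qhat F' \<mu> mj p \<kappa> X n \<omega> $$ (i, j) = Qhat F' \<mu> mj p \<kappa> X n \<omega> $$ (j, i)"
proof -
  let ?Z = "Zmat F' \<mu> mj p \<kappa> X n \<omega>"
  have "col ?Z i \<bullet> col ?Z j = col ?Z j \<bullet> col ?Z i"
    using assms Zmat_carrier[of F' \<mu> mj p \<kappa> X n \<omega>] by (intro comm_scalar_prod[of _ n]) auto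
  then show ?thesis
    using assms Zmat_carrier[of F' \<mu> mj p \<kappa> X n \<omega>] by (simp add: Qhat_def)
qed

locale additive_link_model = prob_space M
  for M :: "'a measure"
    and Y :: "nat \<Rightarrow> 'a \<Rightarrow> real" and X :: "nat \<Rightarrow> 'a \<Rightarrow> real^'d::finite"
    and F F' :: "real \<Rightarrow> real" and \<mu> :: real and mj :: "'d \<Rightarrow> real \<Rightarrow> real"
    and p :: "nat \<Rightarrow> real \<Rightarrow> real" and fX V :: "real^'d \<Rightarrow> real"
    and C_m C_V C_Q :: real +
  assumes Y_measurable[measurable]: "\<And>i. Y i \<in> borel_measurable M"
    and X_measurable[measurable]: "\<And>i. X i \<in> borel_measurable M"
    and indep_obs: "indep_vars (\<lambda>_. borel) (\<lambda>i \<omega>. (Y i \<omega>, X i \<omega>)) UNIV"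
    and ident_obs: "\<And>i. distr M borel (\<lambda>\<omega>. (Y i \<omega>, X i \<omega>)) = distr M borel (\<lambda>\<omega>. (Y 0 \<omega>, X 0 \<omega>))"
    and Y_integrable: "integrable M (Y 0)"
    and cond_mean: "AE \<omega> in M. real_cond_exp M (vimage_algebra (space M) (X 0) borel) (Y 0) \<omega>
                      = F (\<mu> + madd mj (X 0 \<omega>))"
    and X_density: "distributed M lborel (X 0) (\<lambda>x. ennreal (fX x))"
    and density_outside_cube: "\<And>x. x \<notin> cube \<Longrightarrow> fX x = 0"
    and cond_var: "AE \<omega> in M. V (X 0 \<omega>) =
        real_cond_exp M (vimage_algebra (space M) (X 0) borel)
          (\<lambda>\<omega>. (Y 0 \<omega> - F (\<mu> + madd mj (X 0 \<omega>)))^2) \<omega>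
        - (real_cond_exp M (vimage_algebra (space M) (X 0) borel)
          (\<lambda>\<omega>. Y 0 \<omega> - F (\<mu> + madd mj (X 0 \<omega>))) \<omega>)^2"
    and cond_var_le: "\<And>x. x \<in> cube \<Longrightarrow> V x \<le> C_V"
    and residual_sq_integrable: "integrable M (\<lambda>\<omega>. (Y 0 \<omega> - F (\<mu> + madd mj (X 0 \<omega>)))^2)"
    and m_bounded: "\<And>j t. t \<in> {-1..1} \<Longrightarrow> \<bar>mj j t\<bar> \<le> C_m"
    and m_continuous: "\<And>j. continuous_on {-1..1} (mj j)"
    and F_continuous: "continuous_on {\<mu> - C_m * CARD('d) .. \<mu> + C_m * CARD('d)} F"
    and F'_continuous: "continuous_on {\<mu> - C_m * CARD('d) .. \<mu> + C_m * CARD('d)} F'"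
    and basis_integrable: "\<And>k. 1 \<le> k \<Longrightarrow> p k integrable_on {-1..1}"
    and Q_diag_le: "\<And>\<kappa> a. a < \<kappa> * CARD('d) + 1 \<Longrightarrow> Qmat M (X 0) F' \<mu> mj p \<kappa> $$ (a, a) \<le> C_Q"
    and Q_pos: "\<And>\<kappa>. 0 < min_eig (Qmat M (X 0) F' \<mu> mj p \<kappa>)"
begin

abbreviation H :: "'a measure" where "H \<equiv> vimage_algebra (space M) (X 0) borel"

lemma sigma_finite_subalgebra_H: "sigma_finite_subalgebra M H"
proof -
  have "subalgebra M H"
    using sets_image_in_sets[OF refl X_measurable[of 0]] by (auto simp: subalgebra_def)
  then show ?thesis
    by (intro finite_measure_subalgebra_is_sigma_finite) unfold_locales
qed

lemma borel_measurable_H: "f \<in> borel_measurable borel \<Longrightarrow> (\<lambda>\<omega>. f (X 0 \<omega>)) \<in> borel_measurable H"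
  by (rule measurable_compose[OF measurable_vimage_algebra1]) auto

lemma obs_measurable[measurable]: "(\<lambda>\<omega>. (Y i \<omega>, X i \<omega>)) \<in> borel_measurable M"
  by measurable

lemma integrable_obs_iff:
  fixes f :: "real \<times> (real^'d) \<Rightarrow> real"
  assumes "f \<in> borel_measurable borel"
  shows "integrable M (\<lambda>\<omega>. f (Y i \<omega>, X i \<omega>)) \<longleftrightarrow> integrable M (\<lambda>\<omega>. f (Y 0 \<omega>, X 0 \<omega>))"
  using integrable_distr_eq[OF obs_measurable[of i] assms]
    integrable_distr_eq[OF obs_measurable[of 0] assms] ident_obs[of i] by simp

lemma integral_obs_eq:
  fixes f :: "real \<times> (real^'d) \<Rightarrow> real"
  assumes "f \<in> borel_measurable borel"
  shows "(\<integral>\<omega>. f (Y i \<omega>, X i \<omega>) \<partial>M) = (\<integral>\<omega>. f (Y 0 \<omega>, X 0 \<omega>) \<partial>M)"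
  using integral_distr[OF obs_measurable[of i] assms]
    integral_distr[OF obs_measurable[of 0] assms] ident_obs[of i] by simp

lemma AE_X_mem:
  assumes B: "B \<in> sets borel" and ae: "AE x in lborel. x \<in> cube \<longrightarrow> x \<in> B"
  shows "AE \<omega> in M. \<forall>i. X i \<omega> \<in> B"
proof -
  have dens: "distr M lborel (X 0) = density lborel (\<lambda>x. ennreal (fX x))"
    "(\<lambda>x. ennreal (fX x)) \<in> borel_measurable borel"
    using X_density by (auto simp: distributed_def)
  have "AE x in lborel. 0 < ennreal (fX x) \<longrightarrow> x \<in> B"
    using ae by eventually_elim (auto simp: density_outside_cube)
  then have "AE x in distr M lborel (X 0). x \<in> B"
    unfolding dens(1) using dens(2) by (subst AE_density) auto
  then have "AE \<omega> in M. X 0 \<omega> \<in> B"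
    using AE_distrD[of "X 0" M lborel] by simp
  moreover have "(AE \<omega> in M. X i \<omega> \<in> B) \<longleftrightarrow> (AE \<omega> in M. X 0 \<omega> \<in> B)" for i
  proof -
    have "snd \<in> borel_measurable (borel :: (real \<times> (real^'d)) measure)"
      by (intro borel_measurable_continuous_onI continuous_intros)
    from measurable_sets[OF this B]
    have "{z \<in> space borel. snd z \<in> B} \<in> sets (borel :: (real \<times> (real^'d)) measure)"
      by (simp add: vimage_def Int_def conj_commute)
    then have "(AE \<omega> in M. X j \<omega> \<in> B) \<longleftrightarrow> (AE z in distr M borel (\<lambda>\<omega>. (Y j \<omega>, X j \<omega>)). snd z \<in> B)"
      for j
      by (subst AE_distr_iff) auto
    then show ?thesis
      by (simp only: ident_obs[of i])
  qed
  ultimately show ?thesis by (simp add: AE_all_countable)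
qed

lemma C_m_nonneg: "0 \<le> C_m"
proof -
  have "\<bar>mj undefined 0\<bar> \<le> C_m" by (rule m_bounded) simp
  then show ?thesis by linarith
qed

lemma link_argument_mem:
  assumes "x \<in> cube"
  shows "\<mu> + madd mj x \<in> {\<mu> - C_m * CARD('d) .. \<mu> + C_m * CARD('d)}"
proof -
  have "\<bar>madd mj x\<bar> \<le> (\<Sum>j\<in>UNIV. \<bar>mj j (x$j)\<bar>)"
    unfolding madd_def by (rule sum_abs)
  also have "\<dots> \<le> (\<Sum>j\<in>(UNIV::'d set). C_m)"
    using assms by (intro sum_mono m_bounded) (simp add: mem_cube_iff)
  finally have "\<bar>madd mj x\<bar> \<le> C_m * CARD('d)" by (simp add: mult.commute)
  then show ?thesis by (simp add: abs_le_iff)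
qed

lemma exists_link_versions:
  obtains G G' :: "real^'d \<Rightarrow> real"
  where "G \<in> borel_measurable borel" "bounded (range G)" "G' \<in> borel_measurable borel"
    "\<And>x. x \<in> cube \<Longrightarrow> F (\<mu> + madd mj x) = G x"
    "\<And>x. x \<in> cube \<Longrightarrow> F' (\<mu> + madd mj x) = G' x"
proof -
  define lo where "lo = \<mu> - C_m * CARD('d)"
  define hi where "hi = \<mu> + C_m * CARD('d)"
  have lohi: "lo \<le> hi"
    using C_m_nonneg by (simp add: lo_def hi_def)
  define arg where "arg x = \<mu> + (\<Sum>j\<in>UNIV. mj j (max (-1) (min 1 (x$j))))" for x :: "real^'d"
  have "continuous_on UNIV (\<lambda>x::real^'d. mj j (max (-1) (min 1 (x$j))))" for j
    by (rule continuous_on_compose2[OF continuous_on_clamp[OF m_continuous]])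
      (auto intro: continuous_on_component continuous_on_id)
  then have arg_cont: "continuous_on UNIV arg"
    unfolding arg_def by (intro continuous_on_add continuous_on_const continuous_on_sum) auto
  have arg_eq: "arg x = \<mu> + madd mj x" if "x \<in> cube" for x
    using that by (auto simp: arg_def madd_def mem_cube_iff intro!: sum.cong)
  define G where "G x = F (max lo (min hi (arg x)))" for x
  define G' where "G' x = F' (max lo (min hi (arg x)))" for x
  show ?thesis
  proof
    show "G \<in> borel_measurable borel"
      unfolding G_def using F_continuous lohi
      by (intro borel_measurable_continuous_onI continuous_on_compose2[OF continuous_on_clamp arg_cont])
        (auto simp: lo_def hi_def)
    show "G' \<in> borel_measurable borel"
      unfolding G'_def using F'_continuous lohi
      by (intro borel_measurable_continuous_onI continuous_on_compose2[OF continuous_on_clamp arg_cont])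
        (auto simp: lo_def hi_def)
    have "range G \<subseteq> F ` {lo..hi}"
      using lohi by (auto simp: G_def)
    moreover have "compact (F ` {lo..hi})"
      using F_continuous by (intro compact_continuous_image) (auto simp: lo_def hi_def)
    ultimately show "bounded (range G)"
      using bounded_subset compact_imp_bounded by blast
    show "F (\<mu> + madd mj x) = G x" "F' (\<mu> + madd mj x) = G' x" if "x \<in> cube" for x
      using link_argument_mem[OF that] by (simp_all add: G_def G'_def arg_eq[OF that] lo_def hi_def)
  qed
qed

lemma Q_diag_pos:
  assumes "a < \<kappa> * CARD('d) + 1"
  shows "0 < Qmat M (X 0) F' \<mu> mj p \<kappa> $$ (a, a)"
  using Q_pos[of \<kappa>] min_eig_le_diag[OF Qmat_carrier Qmat_symmetric assms]
  by (blast intro: less_le_trans)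

lemma C_Q_nonneg: "0 \<le> C_Q"
  using Q_diag_pos[of 0 0] Q_diag_le[of 0 0] by simp

end

locale additive_link_versions = additive_link_model M Y X F F' \<mu> mj p fX V C_m C_V C_Q
  for M :: "'a measure" and Y and X :: "nat \<Rightarrow> 'a \<Rightarrow> real^'d::finite"
    and F F' \<mu> mj p fX V C_m C_V C_Q +
  fixes Gd :: "(real^'d) set" and G G' :: "real^'d \<Rightarrow> real"
    and Pe :: "nat \<Rightarrow> nat \<Rightarrow> real^'d \<Rightarrow> real"
  assumes Gd_cube: "Gd \<subseteq> cube" and AE_X_Gd: "AE \<omega> in M. \<forall>i. X i \<omega> \<in> Gd"
    and G_borel[measurable]: "G \<in> borel_measurable borel" and G_bounded: "bounded (range G)"
    and G'_borel[measurable]: "G' \<in> borel_measurable borel"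
    and Pe_borel[measurable]: "\<And>\<kappa> a. Pe \<kappa> a \<in> borel_measurable borel"
    and F_eq: "\<And>x. x \<in> Gd \<Longrightarrow> F (\<mu> + madd mj x) = G x"
    and F'_eq: "\<And>x. x \<in> Gd \<Longrightarrow> F' (\<mu> + madd mj x) = G' x"
    and P_eq: "\<And>x \<kappa> a. x \<in> Gd \<Longrightarrow> a < \<kappa> * CARD('d) + 1 \<Longrightarrow> Pvec p \<kappa> x $ a = Pe \<kappa> a x"
begin

definition resid :: "nat \<Rightarrow> 'a \<Rightarrow> real" where
  "resid i \<omega> = Y i \<omega> - G (X i \<omega>)"

definition score :: "nat \<Rightarrow> nat \<Rightarrow> real^'d \<Rightarrow> real" where
  "score \<kappa> a x = G' x * Pe \<kappa> a x"

definition mean_score :: "nat \<Rightarrow> nat \<Rightarrow> nat \<Rightarrow> 'a \<Rightarrow> real" where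
  "mean_score \<kappa> n a \<omega> = 1 / real n * (\<Sum>i<n. resid i \<omega> * score \<kappa> a (X i \<omega>))"

lemma resid_measurable[measurable]: "resid i \<in> borel_measurable M"
  unfolding resid_def by measurable

lemma score_measurable[measurable]: "score \<kappa> a \<in> borel_measurable borel"
  unfolding score_def by measurable

lemma resid_cond_moments:
  shows "integrable M (\<lambda>\<omega>. (resid 0 \<omega>)^2)"
    and "AE \<omega> in M. real_cond_exp M H (resid 0) \<omega> = 0"
    and "AE \<omega> in M. real_cond_exp M H (\<lambda>\<omega>. (resid 0 \<omega>)^2) \<omega> \<le> 2 * C_V"
proof -
  interpret sigma_finite_subalgebra M H by (rule sigma_finite_subalgebra_H)
  have U_eq: "AE \<omega> in M. Y 0 \<omega> - F (\<mu> + madd mj (X 0 \<omega>)) = resid 0 \<omega>"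
    using AE_X_Gd by eventually_elim (simp add: resid_def F_eq)
  show resid2: "integrable M (\<lambda>\<omega>. (resid 0 \<omega>)^2)"
    using U_eq by (intro integrable_cong_AE_imp[OF residual_sq_integrable]) auto
  obtain B where "\<And>x. \<bar>G x\<bar> \<le> B"
    using G_bounded by (auto simp: bounded_iff)
  then have GX: "integrable M (\<lambda>\<omega>. G (X 0 \<omega>))"
    by (intro integrable_const_bound[where B=B]) auto
  have "AE \<omega> in M. real_cond_exp M H (resid 0) \<omega>
      = real_cond_exp M H (Y 0) \<omega> - real_cond_exp M H (\<lambda>\<omega>. G (X 0 \<omega>)) \<omega>"
    unfolding resid_def using Y_integrable GX by (rule real_cond_exp_diff)
  moreover have "AE \<omega> in M. real_cond_exp M H (\<lambda>\<omega>. G (X 0 \<omega>)) \<omega> = G (X 0 \<omega>)"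
    using GX borel_measurable_H[OF G_borel] by (rule real_cond_exp_F_meas)
  ultimately show resid0: "AE \<omega> in M. real_cond_exp M H (resid 0) \<omega> = 0"
    using cond_mean AE_X_Gd by eventually_elim (simp add: F_eq)
  have "integrable M (resid 0)"
    unfolding resid_def using Y_integrable GX by simp
  moreover have "AE \<omega> in M. V (X 0 \<omega>) \<le> C_V"
    using AE_X_Gd Gd_cube cond_var_le by auto
  ultimately show "AE \<omega> in M. real_cond_exp M H (\<lambda>\<omega>. (resid 0 \<omega>)^2) \<omega> \<le> 2 * C_V"
    using residual_sq_integrable
    by (intro real_cond_exp_sq_le_twice_if_cond_var_le[OF _ resid2 resid0 U_eq _ cond_var]) auto
qed

lemma C_V_nonneg: "0 \<le> C_V"
proof -
  interpret sigma_finite_subalgebra M H by (rule sigma_finite_subalgebra_H)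
  have "AE \<omega> in M. 0 \<le> real_cond_exp M H (\<lambda>\<omega>. (resid 0 \<omega>)^2) \<omega>"
    using real_cond_exp_nonneg_eq[of "\<lambda>\<omega>. (resid 0 \<omega>)^2"] by auto
  then have "AE \<omega> in M. 0 \<le> 2 * C_V"
    using resid_cond_moments(3) by eventually_elim auto
  then show ?thesis by simp
qed

lemma score_sq_moments:
  assumes a: "a < \<kappa> * CARD('d) + 1"
  shows "integrable M (\<lambda>\<omega>. (score \<kappa> a (X 0 \<omega>))^2)"
    and "(\<integral>\<omega>. (score \<kappa> a (X 0 \<omega>))^2 \<partial>M) \<le> C_Q"
proof -
  let ?Q = "Qmat M (X 0) F' \<mu> mj p \<kappa>"
  define f where "f \<omega> = (F' (\<mu> + madd mj (X 0 \<omega>)))^2 * (Pvec p \<kappa> (X 0 \<omega>) $ a) * (Pvec p \<kappa> (X 0 \<omega>) $ a)"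
    for \<omega>
  have Qaa: "?Q $$ (a, a) = (\<integral>\<omega>. f \<omega> \<partial>M)"
    using a by (simp add: Qmat_def f_def)
  \<comment> \<open>A non-integrable integrand would have Bochner integral 0.\<close>
  have f_int: "integrable M f"
    using Q_diag_pos[OF a] Qaa not_integrable_integral_eq by fastforce
  have f_eq: "AE \<omega> in M. f \<omega> = (score \<kappa> a (X 0 \<omega>))^2"
    using AE_X_Gd by eventually_elim (simp add: f_def score_def F'_eq P_eq[OF _ a] power2_eq_square mult_ac)
  show "integrable M (\<lambda>\<omega>. (score \<kappa> a (X 0 \<omega>))^2)"
    using f_eq by (intro integrable_cong_AE_imp[OF f_int]) auto
  have "(\<integral>\<omega>. (score \<kappa> a (X 0 \<omega>))^2 \<partial>M) = ?Q $$ (a, a)"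
    unfolding Qaa using f_eq f_int by (intro integral_cong_AE) auto
  also have "\<dots> \<le> C_Q" using Q_diag_le[OF a] .
  finally show "(\<integral>\<omega>. (score \<kappa> a (X 0 \<omega>))^2 \<partial>M) \<le> C_Q" .
qed

lemma resid_score_moments:
  assumes a: "a < \<kappa> * CARD('d) + 1"
  shows "integrable M (\<lambda>\<omega>. (resid 0 \<omega> * score \<kappa> a (X 0 \<omega>))^2)"
    and "(\<integral>\<omega>. (resid 0 \<omega> * score \<kappa> a (X 0 \<omega>))^2 \<partial>M) \<le> 2 * C_V * C_Q"
    and "(\<integral>\<omega>. resid 0 \<omega> * score \<kappa> a (X 0 \<omega>) \<partial>M) = 0"
proof -
  interpret sigma_finite_subalgebra M H by (rule sigma_finite_subalgebra_H)
  note score = score_sq_moments[OF a]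
  have score_H: "(\<lambda>\<omega>. score \<kappa> a (X 0 \<omega>)) \<in> borel_measurable H"
    by (rule borel_measurable_H) simp
  have CV: "0 \<le> 2 * C_V" using C_V_nonneg by simp
  note sq = integrable_sq_mult_if_real_cond_exp_sq_le[OF resid_measurable resid_cond_moments(1)
      resid_cond_moments(3) CV score_H score(1)]
  show int: "integrable M (\<lambda>\<omega>. (resid 0 \<omega> * score \<kappa> a (X 0 \<omega>))^2)" by (rule sq(1))
  have "(\<integral>\<omega>. (resid 0 \<omega> * score \<kappa> a (X 0 \<omega>))^2 \<partial>M) \<le> 2 * C_V * (\<integral>\<omega>. (score \<kappa> a (X 0 \<omega>))^2 \<partial>M)"
    by (rule sq(2))
  also have "\<dots> \<le> 2 * C_V * C_Q" using score(2) CV by (intro mult_left_mono)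
  finally show "(\<integral>\<omega>. (resid 0 \<omega> * score \<kappa> a (X 0 \<omega>))^2 \<partial>M) \<le> 2 * C_V * C_Q" .
  have "integrable M (\<lambda>\<omega>. resid 0 \<omega> * score \<kappa> a (X 0 \<omega>))"
    by (rule square_integrable_imp_integrable[OF _ int]) simp
  then show "(\<integral>\<omega>. resid 0 \<omega> * score \<kappa> a (X 0 \<omega>) \<partial>M) = 0"
    by (rule integral_mult_eq_0_if_real_cond_exp_eq_0[OF resid_measurable resid_cond_moments(2) score_H])
qed

lemma mean_score_sq_moments:
  assumes a: "a < \<kappa> * CARD('d) + 1"
  shows "integrable M (\<lambda>\<omega>. (mean_score \<kappa> n a \<omega>)^2)"
    and "(\<integral>\<omega>. (mean_score \<kappa> n a \<omega>)^2 \<partial>M) \<le> 2 * C_V * C_Q / n"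
  unfolding mean_score_def
proof -
  have [measurable]: "fst \<in> borel_measurable (borel :: (real \<times> (real^'d)) measure)"
    "snd \<in> borel_measurable (borel :: (real \<times> (real^'d)) measure)"
    by (intro borel_measurable_continuous_onI continuous_intros)+
  define \<phi> where "\<phi> z = (fst z - G (snd z)) * score \<kappa> a (snd z)" for z :: "real \<times> (real^'d)"
  have \<phi>_borel[measurable]: "\<phi> \<in> borel_measurable borel"
    unfolding \<phi>_def by measurable
  have \<phi>_obs: "\<phi> (Y i \<omega>, X i \<omega>) = resid i \<omega> * score \<kappa> a (X i \<omega>)" for i \<omega>
    by (simp add: \<phi>_def resid_def)
  have ind: "indep_vars (\<lambda>_. borel) (\<lambda>i \<omega>. \<phi> (Y i \<omega>, X i \<omega>)) UNIV"
    using indep_vars_compose2[OF indep_obs, of "\<lambda>_. \<phi>"] by simp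
  have sq_borel: "(\<lambda>z. (\<phi> z)^2) \<in> borel_measurable borel" by measurable
  have sq_int: "integrable M (\<lambda>\<omega>. (\<phi> (Y i \<omega>, X i \<omega>))^2)" for i
    using integrable_obs_iff[OF sq_borel, of i] resid_score_moments(1)[OF a] by (simp add: \<phi>_obs)
  have mean0: "(\<integral>\<omega>. \<phi> (Y i \<omega>, X i \<omega>) \<partial>M) = 0" for i
    using integral_obs_eq[OF \<phi>_borel, of i] resid_score_moments(3)[OF a] by (simp add: \<phi>_obs)
  have sq_le: "(\<integral>\<omega>. (\<phi> (Y i \<omega>, X i \<omega>))^2 \<partial>M) \<le> 2 * C_V * C_Q" for i
    using integral_obs_eq[OF sq_borel, of i] resid_score_moments(2)[OF a] by (simp add: \<phi>_obs)
  note sum = integral_sum_sq_indep_mean_zero[OF ind sq_int mean0, of n, unfolded \<phi>_obs]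
  show "integrable M (\<lambda>\<omega>. (1 / real n * (\<Sum>i<n. resid i \<omega> * score \<kappa> a (X i \<omega>)))^2)"
    using integrable_divide_zero[OF sum(1), of "real n ^ 2"] by (simp add: power_divide)
  have "(\<integral>\<omega>. (1 / real n * (\<Sum>i<n. resid i \<omega> * score \<kappa> a (X i \<omega>)))^2 \<partial>M)
      = (1 / real n)^2 * (\<Sum>i<n. \<integral>\<omega>. (\<phi> (Y i \<omega>, X i \<omega>))^2 \<partial>M)"
    using sum(2) by (simp add: power_divide \<phi>_obs)
  also have "\<dots> \<le> (1 / real n)^2 * (real n * (2 * C_V * C_Q))"
    using sum_mono[where K="{..<n}", OF sq_le] by (intro mult_left_mono) auto
  also have "\<dots> = 2 * C_V * C_Q / n"
    by (cases "n = 0") (simp_all add: power2_eq_square)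
  finally show "(\<integral>\<omega>. (1 / real n * (\<Sum>i<n. resid i \<omega> * score \<kappa> a (X i \<omega>)))^2 \<partial>M) \<le> 2 * C_V * C_Q / n" .
qed

lemma estimator_vec_nth:
  assumes Gd: "\<forall>i. X i \<omega> \<in> Gd" and a: "a < \<kappa> * CARD('d) + 1"
  shows "((1 / real n) \<cdot>\<^sub>v (transpose_mat (Zmat F' \<mu> mj p \<kappa> X n \<omega>) *\<^sub>v Ubar F \<mu> mj Y X n \<omega>)) $ a
    = mean_score \<kappa> n a \<omega>"
  using a Gd Zmat_carrier[of F' \<mu> mj p \<kappa> X n \<omega>]
  by (auto simp: Ubar_def Zmat_def scalar_prod_def atLeast0LessThan mean_score_def resid_def score_def
      F_eq F'_eq P_eq intro!: sum.cong)

lemma estimator_norm_le: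
  assumes Gd: "\<forall>i. X i \<omega> \<in> Gd" and l: "0 < l"
  shows "\<bar>if l \<le> min_eig (Qhat F' \<mu> mj p \<kappa> X n \<omega>)
          then vnorm (the (mat_inverse (Qhat F' \<mu> mj p \<kappa> X n \<omega>))
                 *\<^sub>v ((1 / real n) \<cdot>\<^sub>v (transpose_mat (Zmat F' \<mu> mj p \<kappa> X n \<omega>) *\<^sub>v Ubar F \<mu> mj Y X n \<omega>)))
          else 0\<bar>
    \<le> sqrt ((\<Sum>a<\<kappa> * CARD('d) + 1. (mean_score \<kappa> n a \<omega>)^2) / l^2)"
    (is "\<bar>if _ then vnorm (_ *\<^sub>v ?v) else 0\<bar> \<le> sqrt (?S / l^2)")
proof -
  have v: "?v \<in> carrier_vec (\<kappa> * CARD('d) + 1)"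
    using Zmat_carrier[of F' \<mu> mj p \<kappa> X n \<omega>] by (simp add: Ubar_def)
  have "(\<Sum>a<\<kappa> * CARD('d) + 1. (?v $ a)^2) = ?S"
    by (intro sum.cong refl) (simp add: estimator_vec_nth[OF Gd])
  moreover have "dim_vec ?v = \<kappa> * CARD('d) + 1" using v by (simp only: carrier_vecD)
  ultimately have "vnorm ?v / l = sqrt (?S / l^2)"
    using l by (simp only: vnorm_def) (simp add: real_sqrt_divide)
  moreover have "0 \<le> vnorm w" for w
    by (simp add: vnorm_def sum_nonneg)
  moreover have "0 \<le> ?S / l^2"
    by (intro divide_nonneg_nonneg sum_nonneg) auto
  ultimately show ?thesis
    using vnorm_mat_inverse_mult_le[OF Qhat_carrier Qhat_symmetric l _ v] by auto
qed

lemma sum_mean_score_sq_moments: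
  assumes k: "1 \<le> \<kappa>"
  shows "integrable M (\<lambda>\<omega>. \<Sum>a<\<kappa> * CARD('d) + 1. (mean_score \<kappa> n a \<omega>)^2)"
    and "(\<integral>\<omega>. (\<Sum>a<\<kappa> * CARD('d) + 1. (mean_score \<kappa> n a \<omega>)^2) \<partial>M)
           \<le> 2 * C_V * C_Q * (CARD('d) + 1) * \<kappa> / n"
proof -
  let ?Nd = "\<kappa> * CARD('d) + 1"
  note moments = mean_score_sq_moments[where \<kappa>=\<kappa> and n=n]
  show "integrable M (\<lambda>\<omega>. \<Sum>a<?Nd. (mean_score \<kappa> n a \<omega>)^2)"
    by (intro Bochner_Integration.integrable_sum moments(1)) simp
  have "(\<integral>\<omega>. (\<Sum>a<?Nd. (mean_score \<kappa> n a \<omega>)^2) \<partial>M)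
      = (\<Sum>a<?Nd. \<integral>\<omega>. (mean_score \<kappa> n a \<omega>)^2 \<partial>M)"
    by (intro Bochner_Integration.integral_sum moments(1)) simp
  also have "\<dots> \<le> real ?Nd * (2 * C_V * C_Q / n)"
    using sum_mono[where K="{..<?Nd}", OF moments(2)] by simp
  also have "\<dots> \<le> (CARD('d) + 1) * \<kappa> * (2 * C_V * C_Q / n)"
    using k C_V_nonneg C_Q_nonneg by (intro mult_right_mono) (simp_all add: algebra_simps)
  also have "\<dots> = 2 * C_V * C_Q * (CARD('d) + 1) * \<kappa> / n"
    by (simp add: algebra_simps)
  finally show "(\<integral>\<omega>. (\<Sum>a<?Nd. (mean_score \<kappa> n a \<omega>)^2) \<partial>M)
      \<le> 2 * C_V * C_Q * (CARD('d) + 1) * \<kappa> / n" .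
qed

theorem estimator_bigOp:
  assumes \<kappa>: "eventually (\<lambda>n. 1 \<le> \<kappa> n) sequentially" and l: "0 < l"
  shows "bigOp M
     (\<lambda>n \<omega>. if l \<le> min_eig (Qhat F' \<mu> mj p (\<kappa> n) X n \<omega>)
            then vnorm (the (mat_inverse (Qhat F' \<mu> mj p (\<kappa> n) X n \<omega>))
                   *\<^sub>v ((1 / real n) \<cdot>\<^sub>v (transpose_mat (Zmat F' \<mu> mj p (\<kappa> n) X n \<omega>)
                          *\<^sub>v Ubar F \<mu> mj Y X n \<omega>)))
            else 0)
     (\<lambda>n. sqrt (real (\<kappa> n)) / sqrt (real n))" (is "bigOp M ?T ?a")
proof (rule bigOp_if_second_moment_le)
  define K where "K = 2 * C_V * C_Q * (CARD('d) + 1) / l^2"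
  define S where "S n \<omega> = (\<Sum>a<\<kappa> n * CARD('d) + 1. (mean_score (\<kappa> n) n a \<omega>)^2) / l^2" for n \<omega>
  have bound: "0 < ?a n \<and> integrable M (S n) \<and> (\<forall>\<omega>. 0 \<le> S n \<omega>)
    \<and> (\<integral>\<omega>. S n \<omega> \<partial>M) \<le> K * (?a n)^2 \<and> (AE \<omega> in M. \<bar>?T n \<omega>\<bar> \<le> sqrt (S n \<omega>))"
    if n: "1 \<le> n" and k: "1 \<le> \<kappa> n" for n
  proof (intro conjI allI)
    note moments = sum_mean_score_sq_moments[OF k, of n]
    show "0 < ?a n" using n k by simp
    show "integrable M (S n)"
      unfolding S_def using moments(1) by (rule integrable_divide_zero)
    show "0 \<le> S n \<omega>" for \<omega>
      unfolding S_def by (intro divide_nonneg_nonneg sum_nonneg) auto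
    have "(\<integral>\<omega>. S n \<omega> \<partial>M) \<le> 2 * C_V * C_Q * (CARD('d) + 1) * \<kappa> n / n / l^2"
      unfolding S_def integral_divide_zero using moments(2) by (rule divide_right_mono) simp
    also have "\<dots> = K * (?a n)^2"
      using n by (simp add: K_def power_divide)
    finally show "(\<integral>\<omega>. S n \<omega> \<partial>M) \<le> K * (?a n)^2" .
    show "AE \<omega> in M. \<bar>?T n \<omega>\<bar> \<le> sqrt (S n \<omega>)"
      using AE_X_Gd unfolding S_def by eventually_elim (rule estimator_norm_le[OF _ l])
  qed
  show "eventually (\<lambda>n. 0 < ?a n \<and> integrable M (S n) \<and> (\<forall>\<omega>. 0 \<le> S n \<omega>)
    \<and> (\<integral>\<omega>. S n \<omega> \<partial>M) \<le> K * (?a n)^2 \<and> (AE \<omega> in M. \<bar>?T n \<omega>\<bar> \<le> sqrt (S n \<omega>))) sequentially"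
    using eventually_conj[OF \<kappa> eventually_ge_at_top[of 1]] by eventually_elim (rule bound; simp)
qed

end

context additive_link_model
begin

lemma exists_versions:
  obtains Gd G G' Pe
  where "additive_link_versions M Y X F F' \<mu> mj p fX V C_m C_V C_Q Gd G G' Pe"
proof (rule exists_link_versions)
  fix G G' :: "real^'d \<Rightarrow> real"
  assume G: "G \<in> borel_measurable borel" "bounded (range G)" "G' \<in> borel_measurable borel"
    "\<And>x. x \<in> cube \<Longrightarrow> F (\<mu> + madd mj x) = G x" "\<And>x. x \<in> cube \<Longrightarrow> F' (\<mu> + madd mj x) = G' x"
  show thesis
  proof (rule exists_Pvec_borel_version[OF basis_integrable])
    fix Gd :: "(real^'d) set" and Pe
    assume Gd: "Gd \<in> sets borel" "Gd \<subseteq> cube" "AE x in lborel. x \<in> cube \<longrightarrow> x \<in> Gd"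
      "\<And>\<kappa> a. Pe \<kappa> a \<in> borel_measurable borel"
      "\<And>x \<kappa> a. x \<in> Gd \<Longrightarrow> a < \<kappa> * CARD('d) + 1 \<Longrightarrow> Pvec p \<kappa> x $ a = Pe \<kappa> a x"
    show thesis
    proof (rule that, unfold_locales)
      show "AE \<omega> in M. \<forall>i. X i \<omega> \<in> Gd"
        using AE_X_mem[OF Gd(1,3)] .
      show "F (\<mu> + madd mj x) = G x" "F' (\<mu> + madd mj x) = G' x" if "x \<in> Gd" for x
        using that Gd(2) G(4,5) by auto
    qed (fact G Gd)+
  qed
qed

end

theorem lemma5:
  fixes M :: "'a measure"
    and Y :: "nat \<Rightarrow> 'a \<Rightarrow> real" and X :: "nat \<Rightarrow> 'a \<Rightarrow> real^'d::finite"
    and F F' F'' :: "real \<Rightarrow> real" and \<mu> :: real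
    and mj :: "'d \<Rightarrow> real \<Rightarrow> real" and \<theta> :: "'d \<Rightarrow> nat \<Rightarrow> real"
    and p :: "nat \<Rightarrow> real \<Rightarrow> real"
    and fX :: "real^'d \<Rightarrow> real" and V :: "real^'d \<Rightarrow> real"
    and K :: "real \<Rightarrow> real" and \<kappa> :: "nat \<Rightarrow> nat" and h :: "nat \<Rightarrow> real"
    and c_V C_V C_U C_m C_F1 c_F2 C_F2 C_Q c_lam c_kap C_theta C_kap C_h \<nu> :: real
  assumes prob: "prob_space M"
    and d2: "CARD('d) \<ge> 2"
    \<comment> \<open>(A1) i.i.d. data and the conditional mean model\<close>
    and rvY: "\<And>i. Y i \<in> borel_measurable M"
    and rvX: "\<And>i. X i \<in> borel_measurable M"
    and indep: "prob_space.indep_vars M (\<lambda>_. borel) (\<lambda>i \<omega>. (Y i \<omega>, X i \<omega>)) UNIV"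
    and ident: "\<And>i. distr M borel (\<lambda>\<omega>. (Y i \<omega>, X i \<omega>)) = distr M borel (\<lambda>\<omega>. (Y 0 \<omega>, X 0 \<omega>))"
    and intY: "integrable M (Y 0)"
    and cmean: "AE \<omega> in M. real_cond_exp M (vimage_algebra (space M) (X 0) borel) (Y 0) \<omega>
                   = F (\<mu> + madd mj (X 0 \<omega>))"
    \<comment> \<open>(A2) support, density, conditional variance, moments\<close>
    and dens: "distributed M lborel (X 0) (\<lambda>x. ennreal (fX x))"
    and dens_out: "\<And>x. x \<notin> cube \<Longrightarrow> fX x = 0"
    and dens_bdd: "\<exists>cf Cf. 0 < cf \<and> (\<forall>x\<in>cube. cf \<le> fX x \<and> fX x \<le> Cf)"
    and dens_C2: "\<exists>Df D2f. (\<forall>x\<in>cube. (fX has_derivative blinfun_apply (Df x)) (at x within cube)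
                    \<and> (Df has_derivative blinfun_apply (D2f x)) (at x within cube))
                    \<and> continuous_on cube D2f"
    and V_bdd: "0 < c_V" "\<And>x. x \<in> cube \<Longrightarrow> c_V \<le> V x \<and> V x \<le> C_V"
    and V_def: "AE \<omega> in M. V (X 0 \<omega>) =
        real_cond_exp M (vimage_algebra (space M) (X 0) borel)
          (\<lambda>\<omega>. (Y 0 \<omega> - F (\<mu> + madd mj (X 0 \<omega>)))^2) \<omega>
        - (real_cond_exp M (vimage_algebra (space M) (X 0) borel)
          (\<lambda>\<omega>. Y 0 \<omega> - F (\<mu> + madd mj (X 0 \<omega>))) \<omega>)^2"
    and U2_int: "integrable M (\<lambda>\<omega>. (Y 0 \<omega> - F (\<mu> + madd mj (X 0 \<omega>)))^2)"
    and U_mom: "\<And>j::nat. j \<ge> 2 \<Longrightarrow>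
        (\<integral>\<^sup>+\<omega>. ennreal (\<bar>Y 0 \<omega> - F (\<mu> + madd mj (X 0 \<omega>))\<bar> ^ j) \<partial>M)
          \<le> ennreal (C_U ^ (j - 2) * fact j * (\<integral>\<omega>. (Y 0 \<omega> - F (\<mu> + madd mj (X 0 \<omega>)))^2 \<partial>M))"
    \<comment> \<open>(A3) additive components and link function\<close>
    and m_bdd: "\<And>j t. t \<in> {-1..1} \<Longrightarrow> \<bar>mj j t\<bar> \<le> C_m"
    and m_int0: "\<And>j. (mj j has_integral 0) {-1..1}"
    and m_C2: "\<And>j. \<exists>m1 m2. (\<forall>t\<in>{-1..1}. (mj j has_real_derivative m1 t) (at t within {-1..1})
                    \<and> (m1 has_real_derivative m2 t) (at t within {-1..1}))
                    \<and> continuous_on {-1..1} m2"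
    and F_bdd: "\<And>t. t \<in> {\<mu> - C_m * CARD('d) .. \<mu> + C_m * CARD('d)} \<Longrightarrow>
                  F t \<le> C_F1 \<and> c_F2 \<le> F' t \<and> F' t \<le> C_F2"
    and cF2_pos: "0 < c_F2"
    and F_C2: "\<And>t. t \<in> {\<mu> - C_m * CARD('d) .. \<mu> + C_m * CARD('d)} \<Longrightarrow>
                  (F has_real_derivative F' t) (at t within {\<mu> - C_m * CARD('d) .. \<mu> + C_m * CARD('d)})
                  \<and> (F' has_real_derivative F'' t) (at t within {\<mu> - C_m * CARD('d) .. \<mu> + C_m * CARD('d)})"
    and F''_cont: "continuous_on {\<mu> - C_m * CARD('d) .. \<mu> + C_m * CARD('d)} F''"
    and F''_lip: "\<exists>L. L-lipschitz_on {\<mu> - C_m * CARD('d) .. \<mu> + C_m * CARD('d)} F''"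
    \<comment> \<open>basis expansion m_j = sum_k theta_jk p_k (in L2[-1,1])\<close>
    and m_expand: "\<And>j. (\<lambda>N. integral {-1..1} (\<lambda>t. (mj j t - (\<Sum>k=1..N. \<theta> j k * p k t))^2))
                     \<longlonglongrightarrow> 0"
    \<comment> \<open>(A4)\<close>
    and Q_entries: "\<And>k a b. a < k * CARD('d) + 1 \<Longrightarrow> b < k * CARD('d) + 1 \<Longrightarrow>
                      \<bar>Qmat M (X 0) F' \<mu> mj p k $$ (a, b)\<bar> \<le> C_Q"
    and Q_eig: "0 < c_lam" "\<And>k. min_eig (Qmat M (X 0) F' \<mu> mj p k) > c_lam"
    and Psi_eig: "\<exists>C. \<forall>k. max_eig (Psimat M (X 0) F' \<mu> mj p V k) \<le> C"
    \<comment> \<open>(A5)\<close>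
    and p_int0: "\<And>k. k \<ge> 1 \<Longrightarrow> (p k has_integral 0) {-1..1}"
    and p_orth: "\<And>j k. j \<ge> 1 \<Longrightarrow> k \<ge> 1 \<Longrightarrow>
                   ((\<lambda>t. p j t * p k t) has_integral (if j = k then 1 else 0)) {-1..1}"
    and zeta_low: "0 < c_kap" "eventually (\<lambda>k. zeta p k TYPE('d) \<ge> c_kap) sequentially"
    and zeta_up: "(\<lambda>k. zeta p k TYPE('d)) \<in> O(\<lambda>k. sqrt (real k))"
    and approx: "\<exists>C. eventually (\<lambda>k. \<exists>\<theta>0. \<theta>0 \<in> carrier_vec (k * CARD('d) + 1)
                      \<and> (\<forall>i < k * CARD('d) + 1. \<bar>\<theta>0 $ i\<bar> \<le> C_theta)
                      \<and> (\<forall>x\<in>cube. \<bar>\<mu> + madd mj x - scalar_prod (Pvec p k x) \<theta>0\<bar> \<le> C / (real k)^2))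
                   sequentially"
    and theta_int: "\<bar>\<mu>\<bar> < C_theta" "\<And>j k. k \<ge> 1 \<Longrightarrow> \<bar>\<theta> j k\<bar> < C_theta"
    \<comment> \<open>(A6)\<close>
    and nu: "0 < \<nu>" "\<nu> < 1/30"
    and kappa: "0 < C_kap" "\<And>n. \<kappa> n = nat \<lfloor>C_kap * real n powr (4/15 + \<nu>)\<rfloor>"
    and bandwidth: "0 < C_h" "\<And>n. h n = C_h * real n powr (-1/5)"
    \<comment> \<open>(A7)\<close>
    and K_bdd: "\<exists>B. \<forall>t. \<bar>K t\<bar> \<le> B"
    and K_cont: "continuous_on UNIV K"
    and K_sym: "\<And>t. K (- t) = K t"
    and K_nonneg: "\<And>t. 0 \<le> K t"
    and K_supp: "\<And>t. t \<notin> {-1..1} \<Longrightarrow> K t = 0"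
    and K_int: "(K has_integral 1) {-1..1}"
  shows "bigOp M
     (\<lambda>n \<omega>. if min_eig (Qhat F' \<mu> mj p (\<kappa> n) X n \<omega>) \<ge> c_lam / 2
            then vnorm (the (mat_inverse (Qhat F' \<mu> mj p (\<kappa> n) X n \<omega>))
                   *\<^sub>v ((1 / real n) \<cdot>\<^sub>v (transpose_mat (Zmat F' \<mu> mj p (\<kappa> n) X n \<omega>)
                          *\<^sub>v Ubar F \<mu> mj Y X n \<omega>)))
            else 0)
     (\<lambda>n. sqrt (real (\<kappa> n)) / sqrt (real n))"
proof -
  \<comment> \<open>Only the hypotheses passed to the locale are needed: the growth rate of \<kappa> matters only
      through \<kappa> n \<ge> 1 eventually, and the smoothness, moment, orthonormality, approximation,
      \<Psi>, kernel and bandwidth conditions are unused.\<close>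
  interpret additive_link_model M Y X F F' \<mu> mj p fX V C_m C_V C_Q
  proof (intro additive_link_model.intro prob additive_link_model_axioms.intro)
    show "continuous_on {-1..1} (mj j)" for j
      using m_C2[of j] by (metis DERIV_continuous_on)
    show "continuous_on {\<mu> - C_m * CARD('d) .. \<mu> + C_m * CARD('d)} F"
      "continuous_on {\<mu> - C_m * CARD('d) .. \<mu> + C_m * CARD('d)} F'"
      using F_C2 by (meson DERIV_continuous_on)+
    show "p k integrable_on {-1..1}" if "1 \<le> k" for k
      using p_int0[OF that] by blast
    show "Qmat M (X 0) F' \<mu> mj p k $$ (a, a) \<le> C_Q" if "a < k * CARD('d) + 1" for k a
      using Q_entries[OF that that] by simp
    show "0 < min_eig (Qmat M (X 0) F' \<mu> mj p k)" for k
      using Q_eig(1) Q_eig(2)[of k] by linarith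
  qed (use rvY rvX indep ident intY cmean dens dens_out V_def V_bdd(2) U2_int m_bdd in auto)
  obtain Gd G G' Pe where "additive_link_versions M Y X F F' \<mu> mj p fX V C_m C_V C_Q Gd G G' Pe"
    by (rule exists_versions)
  then interpret additive_link_versions M Y X F F' \<mu> mj p fX V C_m C_V C_Q Gd G G' Pe .
  have "eventually (\<lambda>n. 1 \<le> \<kappa> n) sequentially"
    using eventually_nat_floor_powr_ge_1[of C_kap "4/15 + \<nu>"] kappa nu by simp
  then show ?thesis
    using estimator_bigOp[of \<kappa> "c_lam / 2"] Q_eig(1) by simp
qed

end
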